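(* Let $N\ge2$ and $m_i\ge2$ for all $i\in\{1,\dots,N\}$. Suppose Assumptions A1 and A2 hold, the game has a (finite) Nash equilibrium $\mathbf x^*$, and for each $i\in\{1,\dots,N\}$ and $k\in\{1,\dots,m_i\}$ the interference graph $\mathcal G_I^i$ and the interference-to-$k$ communication graph $\mathcal G_{C_k}^i$ are undirected and connected. Then for each pair of positive constants $(\Delta,v)$ there exists $\delta^*(\Delta,v)>0$ such that for each $\delta\in(0,\delta^* )$, every solution of the seeking dynamics with $\|\chi(0)\|<\Delta$ satisfies $$\|\chi(t)\|\le\phi(\|\chi(0)\|,\delta t)+v\quad\text{for all }t\ge0,$$ where $\phi$ is a class-$\mathcal{KL}$ function.
   Context: Let $N\ge1$ and $m_i\ge1$ ($i=1,\dots,N$) be integers. Agent $j$ of coalition $i$ ($j\in\{1,\dots,m_i\}$) has action $x_{ij}\in\mathbb R$; $\mathbf x_i=(x_{i1},\dots,x_{im_i})^T$, $\mathbf x=(\mathbf x_1^T,\dots,\mathbf x_N^T)^T\in\mathbb R^{M}$ with $M=\sum_i m_i$, and $\mathbf x_{-i}$ denotes $\mathbf x$ with block $\mathbf x_i$ removed. Agent $j$ of coalition $i$ has a local cost $f_{ij}:\mathbb R^M\to\mathbb R$, and coalition $i$ has cost $f_i=\sum_{j=1}^{m_i}f_{ij}$. A Nash equilibrium is $\mathbf x^*$ with $f_i(\mathbf x_i^*,\mathbf x_{-i}^* )\le f_i(\mathbf x_i,\mathbf x_{-i}^* )$ for all $\mathbf x_i\in\mathbb R^{m_i}$ and all $i$.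 Pseudo-gradient: $\mathcal P(\mathbf x)=((\partial f_1/\partial\mathbf x_1)^T,\dots,(\partial f_N/\partial\mathbf x_N)^T)^T$. Assumption A1: every $f_{ij}$ is $\mathcal C^2$. Assumption A2: $(\mathbf x-\mathbf y)^T(\mathcal P(\mathbf x)-\mathcal P(\mathbf y))>0$ for all distinct $\mathbf x,\mathbf y\in\mathbb R^M$. Interference graph $\mathcal G_I^i$: the undirected graph on vertex set $\{1,\dots,m_i\}$ in which distinct $j,k$ are adjacent iff $f_{ij}$ depends explicitly on $x_{ik}$ or $f_{ik}$ depends explicitly on $x_{ij}$; $\mathcal N_{Ik}^i$ is the neighbor set of $k$ in $\mathcal G_I^i$ and $N_{Ik}^i=|\mathcal N_{Ik}^i|$. In particular $\partial f_{ij}/\partial x_{ik}\equiv0$ whenever $j\notin\mathcal N_{Ik}^i\cup\{k\}$. Communication graph $\mathcal G_C^i$: an undirected weighted graph on $\{1,\dots,m_i\}$ with adjacency matrix $(a_i^{jl})$, $a_i^{jl}=a_i^{lj}\ge0$, $a_i^{jj}=0$. The interference-to-$k$ communication graph $\mathcal G_{C_k}^i$ is the subgraph of $\mathcal G_C^i$ induced on the vertex set $\mathcal N_{Ik}^i\cup\{k\}$ (with inherited weights); its Laplacian is $L_{C_k}^i$ and its number of vertices is $N_{C_k^i}=N_{Ik}^i+1$. Seeking dynamics: fix $\delta>0$ and positive constants $\bar d_{ij}$, set $d_{ij}=\delta\bar d_{ij}$. For all $i,j$: $\dot x_{ij}=-d_{ij}\,g_{ijj}$, and for each $k\in\mathcal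 N_{Ij}^i\cup\{j\}$: $\dot w_{ijk}=-\sum_{l\in\mathcal N_{Ik}^i\cup\{k\}}a_i^{jl}(g_{ijk}-g_{ilk})$, $g_{ijk}=w_{ijk}+\partial f_{ij}(\mathbf x)/\partial x_{ik}$, with initial conditions $w_{ijk}(0)=0$ and $\mathbf x(0)$ arbitrary. Error coordinates: $G_{ik}$ is the vector of $g_{ijk}$ over $j\in\mathcal N_{Ik}^i\cup\{k\}$; $R_{ik}\in\mathbb R^{N_{C_k^i}\times(N_{C_k^i}-1)}$ is any matrix such that $[\mathbf 1_{N_{C_k^i}}/\sqrt{N_{C_k^i}}\ \ R_{ik}]$ is an orthogonal matrix ($\mathbf 1_n$ the all-ones vector); $\bar G_{ik}=R_{ik}^TG_{ik}$. $\bar G=(\bar G_{11}^T,\dots,\bar G_{1m_1}^T,\bar G_{21}^T,\dots,\bar G_{Nm_N}^T)^T$ and $\chi(t)=(\bar G(t)^T,(\mathbf x(t)-\mathbf x^* )^T)^T$. *)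

theory Defs
  imports "HOL-Analysis.Analysis"
begin

text \<open>Agents are indexed by a finite type 'a, coalitions by a finite type 'b;
  c a is the coalition of agent a.  Actions form a vector x in real^'a.\<close>

definition upd :: "real^'a \<Rightarrow> 'a \<Rightarrow> real \<Rightarrow> real^'a" where
  "upd x a t = (\<chi> b. if b = a then t else x $ b)"

definition partial :: "(real^'a \<Rightarrow> real) \<Rightarrow> 'a \<Rightarrow> real^'a \<Rightarrow> real" where
  "partial f a x = deriv (\<lambda>t. f (upd x a t)) (x $ a)"

definition depends_on :: "(real^'a \<Rightarrow> real) \<Rightarrow> 'a \<Rightarrow> bool" where
  "depends_on f a \<longleftrightarrow> (\<exists>x t. f (upd x a t) \<noteq> f x)"

definition C2 :: "(real^'a \<Rightarrow> real) \<Rightarrow> bool" where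
  "C2 f \<longleftrightarrow> (\<exists>D D2.
      (\<forall>x. (f has_derivative blinfun_apply (D x)) (at x)) \<and>
      (\<forall>x. (D has_derivative blinfun_apply (D2 x)) (at x)) \<and>
      continuous_on UNIV D2)"

definition coal_cost :: "('a::finite \<Rightarrow> 'b) \<Rightarrow> ('a \<Rightarrow> real^'a \<Rightarrow> real) \<Rightarrow> 'b \<Rightarrow> real^'a \<Rightarrow> real" where
  "coal_cost c f i x = (\<Sum>a\<in>{a. c a = i}. f a x)"

definition pseudo_gradient :: "('a::finite \<Rightarrow> 'b) \<Rightarrow> ('a \<Rightarrow> real^'a \<Rightarrow> real) \<Rightarrow> real^'a \<Rightarrow> real^'a" where
  "pseudo_gradient c f x = (\<chi> a. partial (coal_cost c f (c a)) a x)"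

definition nash_eq :: "('a::finite \<Rightarrow> 'b) \<Rightarrow> ('a \<Rightarrow> real^'a \<Rightarrow> real) \<Rightarrow> real^'a \<Rightarrow> bool" where
  "nash_eq c f xs \<longleftrightarrow>
     (\<forall>i y. (\<forall>a. c a \<noteq> i \<longrightarrow> y $ a = xs $ a) \<longrightarrow> coal_cost c f i xs \<le> coal_cost c f i y)"

definition strictly_monotone :: "(real^'a \<Rightarrow> real^'a) \<Rightarrow> bool" where
  "strictly_monotone P \<longleftrightarrow> (\<forall>x y. x \<noteq> y \<longrightarrow> (x - y) \<bullet> (P x - P y) > 0)"

definition interferes :: "('a \<Rightarrow> 'b) \<Rightarrow> ('a \<Rightarrow> real^'a \<Rightarrow> real) \<Rightarrow> 'a \<Rightarrow> 'a \<Rightarrow> bool" where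
  "interferes c f j k \<longleftrightarrow> j \<noteq> k \<and> c j = c k \<and> (depends_on (f j) k \<or> depends_on (f k) j)"

text \<open>Vertex set N_Ik union {k} of the interference-to-k communication graph.\<close>
definition cvert :: "('a \<Rightarrow> 'b) \<Rightarrow> ('a \<Rightarrow> real^'a \<Rightarrow> real) \<Rightarrow> 'a \<Rightarrow> 'a set" where
  "cvert c f k = insert k {j. interferes c f j k}"

definition graph_connected :: "'a set \<Rightarrow> ('a \<Rightarrow> 'a \<Rightarrow> bool) \<Rightarrow> bool" where
  "graph_connected V E \<longleftrightarrow> V \<noteq> {} \<and>
     (\<forall>u\<in>V. \<forall>v\<in>V. (\<lambda>x y. x \<in> V \<and> y \<in> V \<and> E x y)\<^sup>*\<^sup>* u v)"

definition gval :: "('a \<Rightarrow> real^'a \<Rightarrow> real) \<Rightarrow> real^'a \<Rightarrow> ('a \<Rightarrow> 'a \<Rightarrow> real) \<Rightarrow> 'a \<Rightarrow> 'a \<Rightarrow> real" where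
  "gval f x w j k = w j k + partial (f j) k x"

definition seeking_solution ::
  "('a::finite \<Rightarrow> 'b) \<Rightarrow> ('a \<Rightarrow> real^'a \<Rightarrow> real) \<Rightarrow> ('a \<Rightarrow> 'a \<Rightarrow> real) \<Rightarrow> ('a \<Rightarrow> real)
   \<Rightarrow> (real \<Rightarrow> real^'a) \<Rightarrow> ('a \<Rightarrow> 'a \<Rightarrow> real \<Rightarrow> real) \<Rightarrow> bool" where
  "seeking_solution c f A d x w \<longleftrightarrow>
     (\<forall>t\<ge>0. (x has_vector_derivative
          (\<chi> j. - d j * gval f (x t) (\<lambda>p q. w p q t) j j)) (at t within {0..})) \<and>
     (\<forall>j k. k \<in> cvert c f j \<longrightarrow>
        w j k 0 = 0 \<and>
        (\<forall>t\<ge>0. (w j k has_real_derivative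
            (- (\<Sum>l\<in>cvert c f k. A j l *
                 (gval f (x t) (\<lambda>p q. w p q t) j k - gval f (x t) (\<lambda>p q. w p q t) l k))))
          (at t within {0..})))"

text \<open>[1/sqrt n * 1, R_k] is an orthogonal matrix, rows indexed by cvert k, the
  columns of R_k indexed by 0..n-2, where n = card (cvert k).\<close>
definition orth_compl :: "('a::finite \<Rightarrow> 'b) \<Rightarrow> ('a \<Rightarrow> real^'a \<Rightarrow> real) \<Rightarrow> ('a \<Rightarrow> 'a \<Rightarrow> nat \<Rightarrow> real) \<Rightarrow> bool" where
  "orth_compl c f R \<longleftrightarrow> (\<forall>k.
     (\<forall>p < card (cvert c f k) - 1. \<forall>q < card (cvert c f k) - 1.
        (\<Sum>j\<in>cvert c f k. R k j p * R k j q) = (if p = q then 1 else 0)) \<and>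
     (\<forall>p < card (cvert c f k) - 1. (\<Sum>j\<in>cvert c f k. R k j p) = 0))"

text \<open>Euclidean norm of chi = (Gbar, x - x*) at a time instant with state (x, w).\<close>
definition chi_norm :: "('a::finite \<Rightarrow> 'b) \<Rightarrow> ('a \<Rightarrow> real^'a \<Rightarrow> real) \<Rightarrow> ('a \<Rightarrow> 'a \<Rightarrow> nat \<Rightarrow> real)
    \<Rightarrow> real^'a \<Rightarrow> real^'a \<Rightarrow> ('a \<Rightarrow> 'a \<Rightarrow> real) \<Rightarrow> real" where
  "chi_norm c f R xs x w = sqrt (
     (\<Sum>k\<in>UNIV. \<Sum>p < card (cvert c f k) - 1.
        (\<Sum>j\<in>cvert c f k. R k j p * gval f x w j k)\<^sup>2) + (norm (x - xs))\<^sup>2)"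

definition classK :: "(real \<Rightarrow> real) \<Rightarrow> bool" where
  "classK \<alpha> \<longleftrightarrow> continuous_on {0..} \<alpha> \<and> strict_mono_on {0..} \<alpha> \<and> \<alpha> 0 = 0"

definition classKL :: "(real \<Rightarrow> real \<Rightarrow> real) \<Rightarrow> bool" where
  "classKL \<phi> \<longleftrightarrow>
     (\<forall>s\<ge>0. classK (\<lambda>r. \<phi> r s)) \<and>
     (\<forall>r\<ge>0. (\<forall>s1 s2. 0 \<le> s1 \<longrightarrow> s1 \<le> s2 \<longrightarrow> \<phi> r s2 \<le> \<phi> r s1) \<and>
             ((\<lambda>s. \<phi> r s) \<longlongrightarrow> 0) at_top)"

end

theory Submission
  imports Defs
begin

text \<open>Along solutions, U = \<Sum>_k \<Sum>_{j \<in> V_k} (g_jk - mean_j g_jk)^2 + \<Sum>_k (n_k / dbar_k) (x_k - x*_k)^2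
  is a Lyapunov function; by Parseval for the orthonormal complement R, its first part is
  exactly |Gbar|^2.  The w-dynamics conserve \<Sum>_j g_jk, which therefore equals the k-th
  component of the pseudo-gradient P, so the x-part of U' is -2\<delta> (x - x*)\<bullet>P(x) up to
  consensus errors, and the connected communication graphs make the consensus part of U'
  at most -\<lambda> times the consensus error.  The only perturbation is the drift of the partial
  derivatives along x, of order \<delta>^2 on sublevel sets.  Hence for small \<delta>, U decreases at
  rate \<delta> \<alpha>(\<theta>) above every level \<theta> \<ge> \<eta>, and taking the infimum over \<theta> of the resulting
  linear decay bounds yields a KL estimate for \<chi> up to the offset v.\<close>

lemma upd_eq_add_axis: "upd x a t = x + (t - x $ a) *\<^sub>R axis a 1"
  unfolding upd_def by (vector axis_def)

lemma upd_same [simp]: "upd x a (x $ a) = x"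
  unfolding upd_def by vector

lemma has_real_derivative_upd:
  assumes D: "\<And>x. (f has_derivative blinfun_apply (D x)) (at x)"
  shows "((\<lambda>t. f (upd x a t)) has_real_derivative D (upd x a t) (axis a 1)) (at t)"
proof -
  have "((\<lambda>t. upd x a t) has_derivative (\<lambda>h. h *\<^sub>R axis a 1)) (at t)"
    unfolding upd_eq_add_axis by (auto intro!: derivative_eq_intros)
  from diff_chain_at[OF this D] show ?thesis
    by (auto intro: has_derivative_imp_has_field_derivative simp: o_def blinfun.scaleR_right)
qed

lemma partial_eq_blinfun_axis:
  assumes "\<And>x. (f has_derivative blinfun_apply (D x)) (at x)"
  shows "partial f a x = D x (axis a 1)"
  unfolding partial_def using DERIV_imp_deriv[OF has_real_derivative_upd[OF assms, of x a "x $ a"]]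
  by simp

lemma partial_eq_0_if_not_depends_on:
  assumes "\<not> depends_on g a"
  shows "partial g a x = 0"
proof -
  have "g (upd x a t) = g x" for t
    using assms unfolding depends_on_def by auto
  then show ?thesis
    unfolding partial_def by simp
qed

lemma norm_vec_power2: "(norm (x :: real^'n))\<^sup>2 = (\<Sum>i\<in>UNIV. (x $ i)\<^sup>2)"
  unfolding power2_norm_eq_inner inner_vec_def by (simp add: power2_eq_square)

lemma power2_diff_le_triangle: "((a::real) - b)\<^sup>2 \<le> 2 * (a - c)\<^sup>2 + 2 * (c - b)\<^sup>2"
proof -
  have "0 \<le> ((a - c) - (c - b))\<^sup>2"
    by simp
  then show ?thesis
    by (simp add: power2_eq_square algebra_simps)
qed

lemma two_mult_le_weighted_squares:
  fixes a b e :: real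
  assumes "e > 0"
  shows "2 * (a * b) \<le> e * a\<^sup>2 + b\<^sup>2 / e"
proof -
  have "0 \<le> (e * a - b)\<^sup>2 / e"
    using assms by simp
  also have "\<dots> = e * a\<^sup>2 - 2 * (a * b) + b\<^sup>2 / e"
    using assms by (simp add: power2_eq_square field_simps)
  finally show ?thesis
    by simp
qed

lemma sum_dev_mean_eq_0:
  fixes y :: "'a \<Rightarrow> real"
  assumes "finite V" "V \<noteq> {}"
  shows "(\<Sum>j\<in>V. y j - (\<Sum>l\<in>V. y l) / card V) = 0"
  using assms by (simp add: sum_subtractf)

lemma sum_sq_dev_mean_le:
  fixes y :: "'a \<Rightarrow> real"
  assumes "finite V" "V \<noteq> {}"
  shows "(\<Sum>j\<in>V. (y j - (\<Sum>l\<in>V. y l) / card V)\<^sup>2) \<le> (\<Sum>j\<in>V. (y j - c)\<^sup>2)"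
proof -
  define m where "m = (\<Sum>l\<in>V. y l) / card V"
  have "(\<Sum>j\<in>V. (y j - c)\<^sup>2) = (\<Sum>j\<in>V. (y j - m)\<^sup>2 + 2 * (m - c) * (y j - m) + (m - c)\<^sup>2)"
    by (rule sum.cong) (auto simp: power2_eq_square algebra_simps)
  also have "\<dots> = (\<Sum>j\<in>V. (y j - m)\<^sup>2) + 2 * (m - c) * (\<Sum>j\<in>V. y j - m) + card V * (m - c)\<^sup>2"
    by (simp add: sum.distrib sum_distrib_left)
  finally show ?thesis
    using sum_dev_mean_eq_0[OF assms, of y] by (simp add: m_def)
qed

lemma sum_sq_dev_mean_eq:
  fixes y :: "'a \<Rightarrow> real"
  assumes "finite V" "V \<noteq> {}"
  shows "(\<Sum>j\<in>V. (y j - (\<Sum>l\<in>V. y l) / card V)\<^sup>2) = (\<Sum>j\<in>V. (y j)\<^sup>2) - (\<Sum>j\<in>V. y j)\<^sup>2 / card V"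
proof -
  define S where "S = (\<Sum>l\<in>V. y l)"
  define m where "m = S / card V"
  have n: "real (card V) > 0"
    using assms by (simp add: card_gt_0_iff)
  have "(\<Sum>j\<in>V. (y j - m)\<^sup>2) = (\<Sum>j\<in>V. (y j)\<^sup>2 - 2 * m * y j + m\<^sup>2)"
    by (intro sum.cong refl) (simp add: power2_eq_square algebra_simps)
  also have "\<dots> = (\<Sum>j\<in>V. (y j)\<^sup>2) - 2 * m * S + card V * m\<^sup>2"
    unfolding S_def by (simp add: sum.distrib sum_subtractf sum_distrib_left)
  also have "\<dots> = (\<Sum>j\<in>V. (y j)\<^sup>2) - S\<^sup>2 / card V"
    using n by (simp add: m_def power2_eq_square field_simps)
  finally show ?thesis
    by (simp add: m_def S_def)
qed

lemma sqrt_le_add_sqrt_if_mult_le: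
  fixes q p \<eta> v c :: real
  assumes "c > 0" "c * q \<le> \<eta> + p" "0 \<le> \<eta>" "\<eta> \<le> c * v\<^sup>2" "0 \<le> v" "0 \<le> p"
  shows "sqrt q \<le> v + sqrt (p / c)"
proof -
  have "q \<le> \<eta> / c + p / c"
    using assms(1,2) by (simp add: field_simps)
  then have "sqrt q \<le> sqrt (\<eta> / c + p / c)"
    by (rule real_sqrt_le_mono)
  also have "\<dots> \<le> sqrt (\<eta> / c) + sqrt (p / c)"
    by (rule sqrt_add_le_add_sqrt) (use assms in auto)
  also have "sqrt (\<eta> / c) \<le> sqrt (v\<^sup>2)"
    using assms(1,4) by (intro real_sqrt_le_mono) (simp add: field_simps)
  finally show ?thesis
    using assms(5) by simp
qed

section \<open>Coordinates in an orthonormal complement of the mean\<close>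

lemma sum_sq_inner_orthonormal_supported:
  fixes B :: "(real^'n) set" and V :: "'n set"
  assumes orth: "pairwise orthogonal B" and unit: "\<forall>b\<in>B. norm b = 1"
    and supp: "\<forall>b\<in>B. \<forall>j. j \<notin> V \<longrightarrow> b $ j = 0"
    and card: "card B = card V" and fin: "finite B"
    and y: "\<forall>j. j \<notin> V \<longrightarrow> y $ j = 0"
  shows "(\<Sum>b\<in>B. (y \<bullet> b)\<^sup>2) = y \<bullet> y"
proof -
  define E where "E = (\<lambda>j. axis j (1::real)) ` V"
  define S where "S = {x::real^'n. \<forall>i\<in>Basis. i \<notin> E \<longrightarrow> x \<bullet> i = 0}"
  have supported_in_S: "x \<in> S" if "\<forall>j. j \<notin> V \<longrightarrow> x $ j = 0" for x
    using that unfolding S_def E_def by (auto simp: Basis_vec_def inner_axis)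
  have "E \<subseteq> Basis"
    unfolding E_def by (auto simp: Basis_vec_def)
  moreover have "card E = card V"
    unfolding E_def by (rule card_image) (auto intro!: inj_onI simp: axis_eq_axis)
  ultimately have "dim S = card B"
    unfolding S_def using card by (simp add: dim_substandard)
  moreover have "independent B"
    using pairwise_orthogonal_independent[OF orth] unit by fastforce
  moreover have "B \<subseteq> S"
    using supp supported_in_S by blast
  ultimately have "S \<subseteq> span B"
    using card_eq_dim[of B S] fin by simp
  then have "y \<in> span B"
    using supported_in_S y by blast
  then have "y \<bullet> y = y \<bullet> (\<Sum>b\<in>B. (y \<bullet> b) *\<^sub>R b)"
    using orthonormal_basis_expand[OF orth _ _ fin] unit by simp
  then show ?thesis
    by (simp add: inner_sum_right power2_eq_square)
qed

lemma orth_compl_sum_sq_coords: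
  fixes V :: "'n::finite set" and R :: "'n \<Rightarrow> nat \<Rightarrow> real" and y :: "'n \<Rightarrow> real"
  assumes orth: "\<forall>p<card V - 1. \<forall>q<card V - 1. (\<Sum>j\<in>V. R j p * R j q) = (if p = q then 1 else 0)"
    and zero_sum: "\<forall>p<card V - 1. (\<Sum>j\<in>V. R j p) = 0" and "V \<noteq> {}"
  shows "(\<Sum>p<card V - 1. (\<Sum>j\<in>V. R j p * y j)\<^sup>2) = (\<Sum>j\<in>V. (y j - (\<Sum>l\<in>V. y l) / card V)\<^sup>2)"
proof -
  define n where "n = card V"
  have n: "n > 0"
    using \<open>V \<noteq> {}\<close> by (simp add: n_def card_gt_0_iff)
  define ext :: "('n \<Rightarrow> real) \<Rightarrow> real^'n" where "ext a = (\<chi> j. if j \<in> V then a j else 0)" for a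
  have inner_ext: "ext a \<bullet> ext b = (\<Sum>j\<in>V. a j * b j)" for a b
    by (simp add: ext_def inner_vec_def if_distrib[of "\<lambda>x. x * _"] sum.If_cases)
  define col where "col p = ext (\<lambda>j. R j p)" for p
  define u where "u = ext (\<lambda>_. 1 / sqrt n)"
  have col_col: "col p \<bullet> col q = (if p = q then 1 else 0)" if "p < n - 1" "q < n - 1" for p q
    using orth that unfolding col_def inner_ext n_def by auto
  have u_col: "u \<bullet> col p = 0" if "p < n - 1" for p
    using zero_sum that unfolding col_def u_def inner_ext n_def by (simp add: sum_divide_distrib[symmetric])
  have u_u: "u \<bullet> u = 1"
    unfolding u_def inner_ext using n \<open>V \<noteq> {}\<close> by (simp add: n_def power2_eq_square[symmetric] power_divide)
  define B where "B = insert u (col ` {..<n - 1})"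
  have inj: "inj_on col {..<n - 1}"
    by (rule inj_onI) (metis col_col lessThan_iff zero_neq_one)
  have u_notin: "u \<notin> col ` {..<n - 1}"
    using u_col u_u by auto
  have "(\<Sum>b\<in>B. (ext y \<bullet> b)\<^sup>2) = ext y \<bullet> ext y"
  proof (rule sum_sq_inner_orthonormal_supported)
    show "pairwise orthogonal B"
      unfolding pairwise_def B_def orthogonal_def using col_col u_col by (auto simp: inner_commute)
    show "\<forall>b\<in>B. norm b = 1"
      using col_col u_u unfolding B_def by (auto simp: norm_eq_sqrt_inner)
    show "card B = card V"
      unfolding B_def using u_notin inj n by (simp add: card_image n_def)
  qed (auto simp: B_def col_def u_def ext_def)
  then have "(ext y \<bullet> u)\<^sup>2 + (\<Sum>p<n - 1. (ext y \<bullet> col p)\<^sup>2) = ext y \<bullet> ext y"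
    unfolding B_def using u_notin inj by (simp add: sum.reindex)
  moreover have "(ext y \<bullet> u)\<^sup>2 = (\<Sum>j\<in>V. y j)\<^sup>2 / n"
    unfolding u_def inner_ext using n by (simp add: sum_divide_distrib[symmetric] power_divide)
  ultimately show ?thesis
    using sum_sq_dev_mean_eq[of V y] \<open>V \<noteq> {}\<close>
    by (simp add: n_def inner_ext col_def power2_eq_square mult.commute)
qed

section \<open>Laplacian quadratic forms\<close>

definition laplacian_form :: "'a set \<Rightarrow> ('a \<Rightarrow> 'a \<Rightarrow> real) \<Rightarrow> ('a \<Rightarrow> real) \<Rightarrow> real" where
  "laplacian_form V A y = (\<Sum>j\<in>V. \<Sum>l\<in>V. A j l * (y j - y l)\<^sup>2)"

lemma laplacian_form_ge_edge:
  assumes "finite V" "\<forall>j\<in>V. \<forall>l\<in>V. A j l \<ge> 0" "u \<in> V" "v \<in> V"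
  shows "A u v * (y u - y v)\<^sup>2 \<le> laplacian_form V A y"
proof -
  have "A u v * (y u - y v)\<^sup>2 \<le> (\<Sum>l\<in>V. A u l * (y u - y l)\<^sup>2)"
    by (rule member_le_sum[where f = "\<lambda>l. A u l * (y u - y l)\<^sup>2"]) (use assms in auto)
  also have "\<dots> \<le> laplacian_form V A y"
    unfolding laplacian_form_def
    by (rule member_le_sum[where f = "\<lambda>j. \<Sum>l\<in>V. A j l * (y j - y l)\<^sup>2"])
       (use assms in \<open>auto intro!: sum_nonneg\<close>)
  finally show ?thesis .
qed

lemma laplacian_form_bounds_path_difference:
  assumes fin: "finite V" and nonneg: "\<forall>j\<in>V. \<forall>l\<in>V. A j l \<ge> 0"
    and path: "(\<lambda>x y. x \<in> V \<and> y \<in> V \<and> A x y > 0)\<^sup>*\<^sup>* u v"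
  shows "\<exists>K\<ge>0. \<forall>y. (y v - y u)\<^sup>2 \<le> K * laplacian_form V A y"
  using path
proof (induction rule: rtranclp_induct)
  case base
  then show ?case
    by auto
next
  case (step w v)
  then obtain K where K: "K \<ge> 0" "\<forall>y. (y w - y u)\<^sup>2 \<le> K * laplacian_form V A y"
    by auto
  have wv: "w \<in> V" "v \<in> V" "A w v > 0"
    using step by auto
  show ?case
  proof (intro exI[of _ "2 * K + 2 / A w v"] conjI allI)
    show "0 \<le> 2 * K + 2 / A w v"
      using K wv by auto
    fix y :: "'a \<Rightarrow> real"
    have "A w v * (y w - y v)\<^sup>2 \<le> laplacian_form V A y"
      by (rule laplacian_form_ge_edge[OF fin nonneg wv(1,2)])
    then have edge: "(y w - y v)\<^sup>2 \<le> laplacian_form V A y / A w v"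
      using wv(3) by (simp add: field_simps)
    have "(y v - y u)\<^sup>2 \<le> 2 * (y w - y v)\<^sup>2 + 2 * (y w - y u)\<^sup>2"
      using power2_diff_le_triangle[of "y v" "y u" "y w"] power2_commute[of "y v" "y w"] by linarith
    also have "\<dots> \<le> 2 * (laplacian_form V A y / A w v) + 2 * (K * laplacian_form V A y)"
      using edge K(2) by (intro add_mono) auto
    also have "\<dots> = (2 * K + 2 / A w v) * laplacian_form V A y"
      by (simp add: algebra_simps)
    finally show "(y v - y u)\<^sup>2 \<le> (2 * K + 2 / A w v) * laplacian_form V A y" .
  qed
qed

lemma laplacian_form_ge_variance:
  assumes fin: "finite V" and conn: "graph_connected V (\<lambda>j l. A j l > 0)"
    and nonneg: "\<forall>j\<in>V. \<forall>l\<in>V. A j l \<ge> 0"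
  shows "\<exists>\<mu>>0. \<forall>y. \<mu> * (\<Sum>j\<in>V. (y j - (\<Sum>l\<in>V. y l) / card V)\<^sup>2) \<le> laplacian_form V A y"
proof -
  from conn obtain j0 where j0: "j0 \<in> V"
    unfolding graph_connected_def by auto
  have "\<forall>j\<in>V. \<exists>K\<ge>0. \<forall>y. (y j - y j0)\<^sup>2 \<le> K * laplacian_form V A y"
    using conn j0 unfolding graph_connected_def
    by (auto intro!: laplacian_form_bounds_path_difference[OF fin nonneg])
  then obtain K where K: "\<forall>j\<in>V. K j \<ge> 0 \<and> (\<forall>y. (y j - y j0)\<^sup>2 \<le> K j * laplacian_form V A y)"
    by metis
  define S where "S = (\<Sum>j\<in>V. K j)"
  have S: "S \<ge> 0"
    unfolding S_def using K by (auto intro!: sum_nonneg)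
  show ?thesis
  proof (intro exI[of _ "1 / (1 + S)"] conjI allI)
    show "0 < 1 / (1 + S)"
      using S by auto
    fix y :: "'a \<Rightarrow> real"
    have Q: "laplacian_form V A y \<ge> 0"
      unfolding laplacian_form_def using nonneg by (auto intro!: sum_nonneg)
    have "(\<Sum>j\<in>V. (y j - (\<Sum>l\<in>V. y l) / card V)\<^sup>2) \<le> (\<Sum>j\<in>V. (y j - y j0)\<^sup>2)"
      by (rule sum_sq_dev_mean_le[OF fin]) (use j0 in auto)
    also have "\<dots> \<le> (\<Sum>j\<in>V. K j * laplacian_form V A y)"
      using K by (intro sum_mono) auto
    also have "\<dots> = S * laplacian_form V A y"
      by (simp add: S_def sum_distrib_right)
    also have "\<dots> \<le> (1 + S) * laplacian_form V A y"
      using Q by (simp add: algebra_simps)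
    finally show "1 / (1 + S) * (\<Sum>j\<in>V. (y j - (\<Sum>l\<in>V. y l) / card V)\<^sup>2) \<le> laplacian_form V A y"
      using S by (simp add: field_simps)
  qed
qed

lemma laplacian_sum_antisym:
  fixes A :: "'a \<Rightarrow> 'a \<Rightarrow> real"
  assumes "\<forall>j\<in>V. \<forall>l\<in>V. A j l = A l j"
  shows "(\<Sum>j\<in>V. \<Sum>l\<in>V. A j l * ((y j - y l) * z j)) = - (\<Sum>j\<in>V. \<Sum>l\<in>V. A j l * ((y j - y l) * z l))"
proof -
  have "(\<Sum>j\<in>V. \<Sum>l\<in>V. A j l * ((y j - y l) * z j)) = (\<Sum>l\<in>V. \<Sum>j\<in>V. A j l * ((y j - y l) * z j))"
    by (rule sum.swap)
  also have "\<dots> = (\<Sum>l\<in>V. \<Sum>j\<in>V. - (A l j * ((y l - y j) * z j)))"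
  proof (intro sum.cong refl)
    fix l j
    assume "l \<in> V" "j \<in> V"
    then have "A j l = A l j"
      using assms by blast
    then show "A j l * ((y j - y l) * z j) = - (A l j * ((y l - y j) * z j))"
      by (simp add: algebra_simps)
  qed
  finally show ?thesis
    by (simp add: sum_negf)
qed

lemma laplacian_rows_sum_eq_0:
  fixes A :: "'a \<Rightarrow> 'a \<Rightarrow> real"
  assumes "\<forall>j\<in>V. \<forall>l\<in>V. A j l = A l j"
  shows "(\<Sum>j\<in>V. \<Sum>l\<in>V. A j l * (y j - y l)) = 0"
  using laplacian_sum_antisym[OF assms, of y "\<lambda>_. 1"] by simp

lemma laplacian_form_eq:
  fixes A :: "'a \<Rightarrow> 'a \<Rightarrow> real"
  assumes "\<forall>j\<in>V. \<forall>l\<in>V. A j l = A l j"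
  shows "2 * (\<Sum>j\<in>V. (y j - m) * (\<Sum>l\<in>V. A j l * (y j - y l))) = laplacian_form V A y"
proof -
  have "(y j - m) * (\<Sum>l\<in>V. A j l * (y j - y l))
      = (\<Sum>l\<in>V. A j l * ((y j - y l) * y j)) - m * (\<Sum>l\<in>V. A j l * (y j - y l))" for j
    by (simp add: sum_distrib_left sum_subtractf[symmetric] algebra_simps)
  then have "(\<Sum>j\<in>V. (y j - m) * (\<Sum>l\<in>V. A j l * (y j - y l)))
      = (\<Sum>j\<in>V. \<Sum>l\<in>V. A j l * ((y j - y l) * y j)) - m * (\<Sum>j\<in>V. \<Sum>l\<in>V. A j l * (y j - y l))"
    by (simp add: sum_subtractf sum_distrib_left)
  also have "\<dots> = (\<Sum>j\<in>V. \<Sum>l\<in>V. A j l * ((y j - y l) * y j))"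
    using laplacian_rows_sum_eq_0[OF assms] by simp
  finally have "2 * (\<Sum>j\<in>V. (y j - m) * (\<Sum>l\<in>V. A j l * (y j - y l)))
      = (\<Sum>j\<in>V. \<Sum>l\<in>V. A j l * ((y j - y l) * y j)) - (\<Sum>j\<in>V. \<Sum>l\<in>V. A j l * ((y j - y l) * y l))"
    using laplacian_sum_antisym[OF assms, of y y] by simp
  also have "\<dots> = laplacian_form V A y"
    unfolding laplacian_form_def sum_subtractf[symmetric]
    by (intro sum.cong refl) (simp add: power2_eq_square algebra_simps)
  finally show ?thesis .
qed

section \<open>Scalar differential inequalities\<close>

lemma has_real_derivative_within_Icc:
  assumes "\<forall>t\<ge>0. (U has_real_derivative U' t) (at t within {0..})" "0 \<le> s" "s \<le> x" "x \<le> t"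
  shows "(U has_real_derivative U' x) (at x within {s..t})"
  using assms by (meson DERIV_subset atLeastAtMost_iff atLeast_iff order_trans subsetI)

lemma last_time_le:
  fixes U :: "real \<Rightarrow> real"
  assumes cont: "continuous_on {a..b} U" and "a \<le> b" "U a \<le> m"
  obtains t0 where "t0 \<in> {a..b}" "U t0 \<le> m" "\<And>t. t0 < t \<Longrightarrow> t \<le> b \<Longrightarrow> m < U t"
proof -
  define S where "S = {a..b} \<inter> U -` {..m}"
  have "closed S"
    unfolding S_def by (rule continuous_closed_preimage[OF cont]) auto
  moreover have "a \<in> S" "bdd_above S"
    using assms by (auto simp: S_def bdd_above_def)
  ultimately have "Sup S \<in> S"
    by (intro closed_contains_Sup) auto
  moreover have "m < U t" if "Sup S < t" "t \<le> b" for t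
  proof (rule ccontr)
    assume "\<not> m < U t"
    then have "t \<in> S"
      using that \<open>Sup S \<in> S\<close> by (auto simp: S_def)
    then show False
      using cSup_upper[OF _ \<open>bdd_above S\<close>] that by fastforce
  qed
  ultimately show ?thesis
    using that by (auto simp: S_def)
qed

lemma first_time_ge:
  fixes U :: "real \<Rightarrow> real"
  assumes cont: "continuous_on {a..b} U" and "a \<le> b" "l \<le> U b"
  obtains t1 where "t1 \<in> {a..b}" "l \<le> U t1" "\<And>t. a \<le> t \<Longrightarrow> t < t1 \<Longrightarrow> U t < l"
proof -
  define S where "S = {a..b} \<inter> U -` {l..}"
  have "closed S"
    unfolding S_def by (rule continuous_closed_preimage[OF cont]) auto
  moreover have "b \<in> S" "bdd_below S"
    using assms by (auto simp: S_def bdd_below_def)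
  ultimately have "Inf S \<in> S"
    by (intro closed_contains_Inf) auto
  moreover have "U t < l" if "a \<le> t" "t < Inf S" for t
  proof (rule ccontr)
    assume "\<not> U t < l"
    then have "t \<in> S"
      using that \<open>Inf S \<in> S\<close> by (auto simp: S_def)
    then show False
      using cInf_lower[OF _ \<open>bdd_below S\<close>] that by fastforce
  qed
  ultimately show ?thesis
    using that by (auto simp: S_def)
qed

lemma deriv_le_imp_le_linear:
  fixes U U' :: "real \<Rightarrow> real"
  assumes "a \<le> b"
    and der: "\<forall>x\<in>{a..b}. (U has_real_derivative U' x) (at x within {a..b})"
    and bound: "\<forall>x\<in>{a<..<b}. U' x \<le> c"
  shows "U b \<le> U a + c * (b - a)"
proof (cases "a = b")
  case False
  then have "a < b"
    using \<open>a \<le> b\<close> by simp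
  moreover have "\<And>x. a \<le> x \<Longrightarrow> x \<le> b \<Longrightarrow> (U has_derivative (*) (U' x)) (at x within {a..b})"
    using der by (simp add: has_field_derivative_def)
  ultimately obtain x where x: "x \<in> {a<..<b}" and mvt: "U b - U a = U' x * (b - a)"
    using mvt_simple[of a b U "\<lambda>x. (*) (U' x)"] by auto
  have "U' x * (b - a) \<le> c * (b - a)"
    using bound x \<open>a < b\<close> by (intro mult_right_mono) auto
  with mvt show ?thesis
    by linarith
qed simp

text \<open>The derivative is only controlled while U lies in the band [m, M]; the first
  crossing of min (U b) M keeps the mean value argument inside the band.\<close>

lemma le_if_deriv_nonpos_in_band:
  fixes U U' :: "real \<Rightarrow> real"
  assumes "a \<le> b"
    and der: "\<forall>t\<in>{a..b}. (U has_real_derivative U' t) (at t within {a..b})"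
    and "U a \<le> m" "m < M"
    and nonpos: "\<forall>t\<in>{a..b}. m \<le> U t \<and> U t \<le> M \<longrightarrow> U' t \<le> 0"
  shows "U b \<le> m"
proof (rule ccontr)
  assume "\<not> U b \<le> m"
  define l where "l = min (U b) M"
  have "m < l"
    using \<open>\<not> U b \<le> m\<close> \<open>m < M\<close> by (simp add: l_def)
  have cont: "continuous_on {a..b} U"
    using der by (intro DERIV_continuous_on) auto
  obtain t1 where t1: "t1 \<in> {a..b}" "l \<le> U t1" and below_l: "\<And>t. a \<le> t \<Longrightarrow> t < t1 \<Longrightarrow> U t < l"
    using first_time_ge[OF cont \<open>a \<le> b\<close>, of l] by (auto simp: l_def)
  have "continuous_on {a..t1} U"
    by (rule continuous_on_subset[OF cont]) (use t1(1) in auto)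
  then obtain t0 where t0: "t0 \<in> {a..t1}" "U t0 \<le> m" and above_m: "\<And>t. t0 < t \<Longrightarrow> t \<le> t1 \<Longrightarrow> m < U t"
    using last_time_le[of a t1 U m] t1(1) \<open>U a \<le> m\<close> by auto
  have "U t1 \<le> U t0 + 0 * (t1 - t0)"
  proof (rule deriv_le_imp_le_linear)
    show "t0 \<le> t1"
      using t0(1) by simp
    show "\<forall>x\<in>{t0..t1}. (U has_real_derivative U' x) (at x within {t0..t1})"
    proof
      fix x
      assume "x \<in> {t0..t1}"
      then have "(U has_real_derivative U' x) (at x within {a..b})"
        using der t0(1) t1(1) by auto
      then show "(U has_real_derivative U' x) (at x within {t0..t1})"
        by (rule DERIV_subset) (use t0(1) t1(1) in auto)
    qed
    show "\<forall>x\<in>{t0<..<t1}. U' x \<le> 0"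
    proof
      fix x
      assume x: "x \<in> {t0<..<t1}"
      then have "m \<le> U x" "U x \<le> M"
        using above_m[of x] below_l[of x] t0(1) by (auto simp: l_def)
      then show "U' x \<le> 0"
        using nonpos x t0(1) t1(1) by auto
    qed
  qed
  then show False
    using t0(2) t1(2) \<open>m < l\<close> by simp
qed

lemma le_max_linear_decay:
  fixes U U' :: "real \<Rightarrow> real"
  assumes der: "\<forall>t\<ge>0. (U has_real_derivative U' t) (at t within {0..})"
    and "c \<ge> 0" and decr: "\<forall>t\<ge>0. \<theta> \<le> U t \<longrightarrow> U' t \<le> - c"
    and "t \<ge> 0"
  shows "U t \<le> max \<theta> (U 0 - c * t)"
proof (cases "U t \<le> \<theta>")
  case False
  have above: "\<theta> < U s" if "s \<in> {0..t}" for s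
  proof (rule ccontr)
    assume "\<not> \<theta> < U s"
    have "U t \<le> \<theta>"
    proof (rule le_if_deriv_nonpos_in_band[of s t U U' \<theta> "\<theta> + 1"])
      show "\<forall>x\<in>{s..t}. (U has_real_derivative U' x) (at x within {s..t})"
        using der that by (auto intro: has_real_derivative_within_Icc)
      show "\<forall>x\<in>{s..t}. \<theta> \<le> U x \<and> U x \<le> \<theta> + 1 \<longrightarrow> U' x \<le> 0"
      proof (intro ballI impI)
        fix x
        assume "x \<in> {s..t}" "\<theta> \<le> U x \<and> U x \<le> \<theta> + 1"
        then show "U' x \<le> 0"
          using decr that \<open>c \<ge> 0\<close> by (smt (verit) atLeastAtMost_iff)
      qed
    qed (use that \<open>\<not> \<theta> < U s\<close> in auto)
    with False show False
      by simp
  qed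
  have "U t \<le> U 0 + (- c) * (t - 0)"
  proof (rule deriv_le_imp_le_linear)
    show "\<forall>x\<in>{0..t}. (U has_real_derivative U' x) (at x within {0..t})"
      using der by (auto intro: has_real_derivative_within_Icc)
    show "\<forall>x\<in>{0<..<t}. U' x \<le> - c"
      using decr above by (auto simp: less_imp_le)
  qed (use \<open>t \<ge> 0\<close> in simp)
  then show ?thesis
    by simp
qed simp

section \<open>A KL envelope\<close>

text \<open>The best of the bounds max \<theta> (r - \<alpha> \<theta> * s) that le_max_linear_decay provides for all
  thresholds \<theta> at once, when the decay rate above the threshold \<theta> is \<alpha> \<theta>.\<close>

definition kl_envelope :: "(real \<Rightarrow> real) \<Rightarrow> real \<Rightarrow> real \<Rightarrow> real" where
  "kl_envelope \<alpha> r s = Inf ((\<lambda>\<theta>. max \<theta> (r - \<alpha> \<theta> * s)) ` {0<..})"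

locale decay_rate =
  fixes \<alpha> :: "real \<Rightarrow> real"
  assumes rate_mono: "\<And>a b. 0 < a \<Longrightarrow> a \<le> b \<Longrightarrow> \<alpha> a \<le> \<alpha> b"
    and rate_pos: "\<And>a. 0 < a \<Longrightarrow> \<alpha> a > 0"
begin

lemma bdd_below_envelope_candidates: "bdd_below ((\<lambda>\<theta>. max \<theta> (r - \<alpha> \<theta> * s)) ` {0<..})"
  by (rule bdd_belowI[of _ 0]) auto

lemma kl_envelope_le: "\<theta> > 0 \<Longrightarrow> kl_envelope \<alpha> r s \<le> max \<theta> (r - \<alpha> \<theta> * s)"
  unfolding kl_envelope_def by (rule cInf_lower[OF _ bdd_below_envelope_candidates]) auto

lemma kl_envelope_nonneg: "kl_envelope \<alpha> r s \<ge> 0"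
  unfolding kl_envelope_def by (rule cInf_greatest) auto

lemma kl_envelope_le_add_dist: "kl_envelope \<alpha> r1 s \<le> kl_envelope \<alpha> r2 s + \<bar>r1 - r2\<bar>"
proof -
  have "kl_envelope \<alpha> r1 s - \<bar>r1 - r2\<bar> \<le> kl_envelope \<alpha> r2 s"
    unfolding kl_envelope_def[of _ r2]
  proof (rule cInf_greatest)
    fix x
    assume "x \<in> (\<lambda>\<theta>. max \<theta> (r2 - \<alpha> \<theta> * s)) ` {0<..}"
    then obtain \<theta> where "\<theta> > 0" "x = max \<theta> (r2 - \<alpha> \<theta> * s)"
      by auto
    then show "kl_envelope \<alpha> r1 s - \<bar>r1 - r2\<bar> \<le> x"
      using kl_envelope_le[of \<theta> r1 s] by auto
  qed auto
  then show ?thesis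
    by simp
qed

lemma continuous_on_kl_envelope: "continuous_on S (\<lambda>r. kl_envelope \<alpha> r s)"
proof -
  have "\<bar>kl_envelope \<alpha> r1 s - kl_envelope \<alpha> r2 s\<bar> \<le> \<bar>r1 - r2\<bar>" for r1 r2
    using kl_envelope_le_add_dist[of r1 s r2] kl_envelope_le_add_dist[of r2 s r1]
    by (simp add: abs_minus_commute)
  then show ?thesis
    unfolding continuous_on_iff dist_real_def by (metis le_less_trans)
qed

lemma kl_envelope_mono: "r1 \<le> r2 \<Longrightarrow> kl_envelope \<alpha> r1 s \<le> kl_envelope \<alpha> r2 s"
  unfolding kl_envelope_def
proof (rule cInf_mono)
  fix b
  assume "r1 \<le> r2" "b \<in> (\<lambda>\<theta>. max \<theta> (r2 - \<alpha> \<theta> * s)) ` {0<..}"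
  then obtain \<theta> where "\<theta> > 0" "b = max \<theta> (r2 - \<alpha> \<theta> * s)"
    by auto
  with \<open>r1 \<le> r2\<close> show "\<exists>a\<in>(\<lambda>\<theta>. max \<theta> (r1 - \<alpha> \<theta> * s)) ` {0<..}. a \<le> b"
    by (intro bexI[of _ "max \<theta> (r1 - \<alpha> \<theta> * s)"]) auto
qed (auto intro: bdd_below_envelope_candidates)

lemma kl_envelope_antimono:
  assumes "0 \<le> s1" "s1 \<le> s2"
  shows "kl_envelope \<alpha> r s2 \<le> kl_envelope \<alpha> r s1"
  unfolding kl_envelope_def
proof (rule cInf_mono)
  fix b
  assume "b \<in> (\<lambda>\<theta>. max \<theta> (r - \<alpha> \<theta> * s1)) ` {0<..}"
  then obtain \<theta> where \<theta>: "\<theta> > 0" "b = max \<theta> (r - \<alpha> \<theta> * s1)"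
    by auto
  have "\<alpha> \<theta> * s1 \<le> \<alpha> \<theta> * s2"
    using rate_pos[OF \<theta>(1)] assms by simp
  then show "\<exists>a\<in>(\<lambda>\<theta>. max \<theta> (r - \<alpha> \<theta> * s2)) ` {0<..}. a \<le> b"
    using \<theta> by (intro bexI[of _ "max \<theta> (r - \<alpha> \<theta> * s2)"]) auto
qed (auto intro: bdd_below_envelope_candidates)

lemma kl_envelope_zero:
  assumes "s \<ge> 0"
  shows "kl_envelope \<alpha> 0 s = 0"
proof -
  have "kl_envelope \<alpha> 0 s \<le> \<theta>" if "\<theta> > 0" for \<theta>
  proof -
    have "0 \<le> \<alpha> \<theta> * s"
      using rate_pos[OF that] assms by simp
    then show ?thesis
      using kl_envelope_le[OF that, of 0 s] that by simp
  qed
  then have "kl_envelope \<alpha> 0 s \<le> 0"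
    by (meson dense not_le)
  then show ?thesis
    using kl_envelope_nonneg[of 0 s] by simp
qed

lemma kl_envelope_tendsto_0: "((\<lambda>s. kl_envelope \<alpha> r s) \<longlongrightarrow> 0) at_top"
proof (rule tendstoI)
  fix e :: real
  assume "e > 0"
  have "eventually (\<lambda>s. kl_envelope \<alpha> r s \<le> e / 2) at_top"
  proof (rule eventually_at_top_linorderI[of "\<bar>r\<bar> / \<alpha> (e / 2)"])
    fix s
    assume s: "s \<ge> \<bar>r\<bar> / \<alpha> (e / 2)"
    have "\<alpha> (e / 2) > 0"
      using rate_pos \<open>e > 0\<close> by simp
    then have "r \<le> \<alpha> (e / 2) * s"
      using s by (simp add: field_simps)
    then show "kl_envelope \<alpha> r s \<le> e / 2"
      using kl_envelope_le[of "e / 2" r s] \<open>e > 0\<close> by simp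
  qed
  then show "eventually (\<lambda>s. dist (kl_envelope \<alpha> r s) 0 < e) at_top"
    by eventually_elim (use \<open>e > 0\<close> kl_envelope_nonneg in auto)
qed

lemma le_add_kl_envelope:
  assumes "\<eta> > 0" "s \<ge> 0"
    and bound: "\<And>\<theta>. \<theta> \<ge> \<eta> \<Longrightarrow> u \<le> max \<theta> (r - \<alpha> \<theta> * s)"
  shows "u \<le> \<eta> + kl_envelope \<alpha> r s"
proof -
  have "u - \<eta> \<le> kl_envelope \<alpha> r s"
    unfolding kl_envelope_def
  proof (rule cInf_greatest)
    fix x
    assume "x \<in> (\<lambda>\<theta>. max \<theta> (r - \<alpha> \<theta> * s)) ` {0<..}"
    then obtain \<theta> where \<theta>: "\<theta> > 0" "x = max \<theta> (r - \<alpha> \<theta> * s)"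
      by auto
    show "u - \<eta> \<le> x"
    proof (cases "\<theta> \<ge> \<eta>")
      case True
      then show ?thesis
        using bound[OF True] \<theta> \<open>\<eta> > 0\<close> by auto
    next
      case False
      then have "\<alpha> \<theta> * s \<le> \<alpha> \<eta> * s"
        using rate_mono[OF \<theta>(1)] \<open>s \<ge> 0\<close> by (simp add: mult_right_mono)
      then show ?thesis
        using bound[of \<eta>] \<theta> \<open>\<eta> > 0\<close> unfolding max_def by (auto split: if_split_asm)
    qed
  qed auto
  then show ?thesis
    by simp
qed

definition kl_bound :: "real \<Rightarrow> real \<Rightarrow> real \<Rightarrow> real \<Rightarrow> real" where
  "kl_bound K L r s = sqrt (K * kl_envelope \<alpha> (L * r\<^sup>2) s) + r * exp (- s)"

lemma classK_kl_bound:
  assumes "K > 0" "L > 0" "s \<ge> 0"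
  shows "classK (\<lambda>r. kl_bound K L r s)"
  unfolding classK_def
proof (intro conjI)
  show "continuous_on {0..} (\<lambda>r. kl_bound K L r s)"
    unfolding kl_bound_def
    by (intro continuous_intros
        continuous_on_compose2[OF continuous_on_kl_envelope[of UNIV s], of _ "\<lambda>r. L * r\<^sup>2", simplified])
  show "strict_mono_on {0..} (\<lambda>r. kl_bound K L r s)"
  proof (rule strict_mono_onI)
    fix r1 r2 :: real
    assume r: "r1 \<in> {0..}" "r2 \<in> {0..}" "r1 < r2"
    then have "L * r1\<^sup>2 \<le> L * r2\<^sup>2"
      using \<open>L > 0\<close> by (intro mult_left_mono power_mono) auto
    then have "sqrt (K * kl_envelope \<alpha> (L * r1\<^sup>2) s) \<le> sqrt (K * kl_envelope \<alpha> (L * r2\<^sup>2) s)"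
      using \<open>K > 0\<close> by (simp add: kl_envelope_mono)
    moreover have "r1 * exp (- s) < r2 * exp (- s)"
      using r by simp
    ultimately show "kl_bound K L r1 s < kl_bound K L r2 s"
      unfolding kl_bound_def by linarith
  qed
  show "kl_bound K L 0 s = 0"
    unfolding kl_bound_def using kl_envelope_zero[OF \<open>s \<ge> 0\<close>] by simp
qed

lemma classKL_kl_bound:
  assumes "K > 0" "L > 0"
  shows "classKL (kl_bound K L)"
  unfolding classKL_def
proof (intro conjI allI impI)
  show "classK (\<lambda>r. kl_bound K L r s)" if "s \<ge> 0" for s
    using assms that by (rule classK_kl_bound)
next
  fix r s1 s2 :: real
  assume "r \<ge> 0" "0 \<le> s1" "s1 \<le> s2"
  then have "sqrt (K * kl_envelope \<alpha> (L * r\<^sup>2) s2) \<le> sqrt (K * kl_envelope \<alpha> (L * r\<^sup>2) s1)"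
    using \<open>K > 0\<close> kl_envelope_antimono by simp
  moreover have "r * exp (- s2) \<le> r * exp (- s1)"
    using \<open>r \<ge> 0\<close> \<open>s1 \<le> s2\<close> by (intro mult_left_mono) auto
  ultimately show "kl_bound K L r s2 \<le> kl_bound K L r s1"
    unfolding kl_bound_def by linarith
next
  fix r :: real
  have "((\<lambda>s. sqrt (K * kl_envelope \<alpha> (L * r\<^sup>2) s)) \<longlongrightarrow> sqrt (K * 0)) at_top"
    by (intro tendsto_intros kl_envelope_tendsto_0)
  moreover have "((\<lambda>s. r * exp (- s)) \<longlongrightarrow> r * 0) at_top"
    by (intro tendsto_intros filterlim_compose[OF exp_at_bot filterlim_uminus_at_bot_at_top])
  ultimately show "((\<lambda>s. kl_bound K L r s) \<longlongrightarrow> 0) at_top"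
    unfolding kl_bound_def using tendsto_add by fastforce
qed

end

lemma interferes_sym: "interferes c f j k \<longleftrightarrow> interferes c f k j"
  unfolding interferes_def by auto

lemma cvert_sym: "j \<in> cvert c f k \<longleftrightarrow> k \<in> cvert c f j"
  unfolding cvert_def using interferes_sym by fastforce

lemma cvert_same_coalition: "j \<in> cvert c f k \<Longrightarrow> c j = c k"
  unfolding cvert_def interferes_def by auto

lemma self_in_cvert: "k \<in> cvert c f k"
  unfolding cvert_def by simp

locale coalition_game =
  fixes c :: "'a::finite \<Rightarrow> 'b::finite"
    and f :: "'a \<Rightarrow> real^'a \<Rightarrow> real"
    and A :: "'a \<Rightarrow> 'a \<Rightarrow> real"
    and dbar :: "'a \<Rightarrow> real"
    and xs :: "real^'a"
    and R :: "'a \<Rightarrow> 'a \<Rightarrow> nat \<Rightarrow> real"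
  assumes costs_C2: "\<forall>a. C2 (f a)"
    and pg_strictly_monotone: "strictly_monotone (pseudo_gradient c f)"
    and nash: "nash_eq c f xs"
    and comm_connected: "\<forall>k. graph_connected (cvert c f k) (\<lambda>j l. A j l > 0)"
    and A_sym: "\<forall>j l. c j = c l \<longrightarrow> A j l = A l j"
    and A_nonneg: "\<forall>j l. c j = c l \<longrightarrow> A j l \<ge> 0"
    and dbar_pos: "\<forall>a. dbar a > 0"
    and R_orth: "orth_compl c f R"
begin

abbreviation "V k \<equiv> cvert c f k"
abbreviation "n k \<equiv> card (V k)"
abbreviation "pg \<equiv> pseudo_gradient c f"

lemma n_pos: "n k > 0"
  using self_in_cvert[of k] by (auto simp: card_gt_0_iff)

lemma A_sym_on_cvert: "\<forall>j\<in>V k. \<forall>l\<in>V k. A j l = A l j"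
  using A_sym cvert_same_coalition by metis

lemma A_nonneg_on_cvert: "\<forall>j\<in>V k. \<forall>l\<in>V k. A j l \<ge> 0"
  using A_nonneg cvert_same_coalition by metis

definition Df :: "'a \<Rightarrow> real^'a \<Rightarrow> (real^'a) \<Rightarrow>\<^sub>L real" where
  "Df j = (SOME D. \<exists>D2. (\<forall>x. (f j has_derivative blinfun_apply (D x)) (at x)) \<and>
      (\<forall>x. (D has_derivative blinfun_apply (D2 x)) (at x)) \<and> continuous_on UNIV D2)"

definition D2f :: "'a \<Rightarrow> real^'a \<Rightarrow> (real^'a) \<Rightarrow>\<^sub>L (real^'a) \<Rightarrow>\<^sub>L real" where
  "D2f j = (SOME D2. (\<forall>x. (Df j has_derivative blinfun_apply (D2 x)) (at x)) \<and> continuous_on UNIV D2)"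

lemma Df_spec: "(\<forall>x. (f j has_derivative blinfun_apply (Df j x)) (at x)) \<and>
   (\<exists>D2. (\<forall>x. (Df j has_derivative blinfun_apply (D2 x)) (at x)) \<and> continuous_on UNIV D2)"
  using someI_ex[OF costs_C2[rule_format, of j, unfolded C2_def]] unfolding Df_def by blast

lemma has_derivative_Df: "(f j has_derivative blinfun_apply (Df j x)) (at x)"
  using Df_spec by blast

lemma has_derivative_D2f: "(Df j has_derivative blinfun_apply (D2f j x)) (at x)"
  and continuous_on_D2f: "continuous_on UNIV (D2f j)"
  using someI_ex[OF conjunct2[OF Df_spec[of j]]] unfolding D2f_def by blast+

lemma continuous_on_Df_apply: "continuous_on UNIV (\<lambda>y. Df j y v)"
proof -
  have "continuous_on UNIV (Df j)"
    using has_derivative_D2f by (meson continuous_on_eq_continuous_within has_derivative_continuous)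
  then show ?thesis
    by (rule blinfun.continuous_on[OF _ continuous_on_const])
qed

lemma partial_eq_Df: "partial (f j) k x = Df j x (axis k 1)"
  by (rule partial_eq_blinfun_axis[OF has_derivative_Df])

lemma has_real_derivative_coal_cost_upd:
  "((\<lambda>t. coal_cost c f i (upd x k t)) has_real_derivative
      (\<Sum>a\<in>{a. c a = i}. Df a (upd x k t) (axis k 1))) (at t)"
  unfolding coal_cost_def by (intro DERIV_sum has_real_derivative_upd[OF has_derivative_Df])

lemma pg_eq_sum_coalition: "pg x $ k = (\<Sum>a\<in>{a. c a = c k}. Df a x (axis k 1))"
  unfolding pseudo_gradient_def partial_def
  using DERIV_imp_deriv[OF has_real_derivative_coal_cost_upd[of "c k" x k "x $ k"]] by simp

lemma pg_eq_sum_cvert: "pg x $ k = (\<Sum>j\<in>V k. Df j x (axis k 1))"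
  unfolding pg_eq_sum_coalition
proof (rule sum.mono_neutral_right)
  show "V k \<subseteq> {a. c a = c k}"
    using cvert_same_coalition by auto
  show "\<forall>a\<in>{a. c a = c k} - V k. Df a x (axis k 1) = 0"
  proof
    fix a
    assume "a \<in> {a. c a = c k} - V k"
    then have "\<not> depends_on (f a) k"
      unfolding cvert_def interferes_def by auto
    then show "Df a x (axis k 1) = 0"
      using partial_eq_0_if_not_depends_on partial_eq_Df by metis
  qed
qed simp

lemma pg_nash_eq_0: "pg xs = 0"
proof -
  have "pg xs $ k = 0" for k
  proof -
    have "((\<lambda>t. coal_cost c f (c k) (upd xs k t)) has_real_derivative pg xs $ k) (at (xs $ k))"
      using has_real_derivative_coal_cost_upd[of "c k" xs k "xs $ k"] pg_eq_sum_coalition by simp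
    moreover have "coal_cost c f (c k) (upd xs k (xs $ k)) \<le> coal_cost c f (c k) (upd xs k y)" for y
    proof -
      have "\<forall>a. c a \<noteq> c k \<longrightarrow> upd xs k y $ a = xs $ a"
        unfolding upd_def by auto
      then show ?thesis
        using nash unfolding nash_eq_def by simp
    qed
    ultimately show ?thesis
      using DERIV_local_min[of _ _ _ 1] by force
  qed
  then show ?thesis
    by (simp add: vec_eq_iff)
qed

lemma continuous_on_pg_component: "continuous_on S (\<lambda>y. pg y $ k)"
  unfolding pg_eq_sum_cvert
  by (intro continuous_on_sum continuous_on_Df_apply[THEN continuous_on_subset]) auto

definition gap :: "real^'a \<Rightarrow> real" where
  "gap y = (y - xs) \<bullet> (pg y - pg xs)"

lemma pg_monotone: "(y - z) \<bullet> (pg y - pg z) \<ge> 0"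
  using pg_strictly_monotone unfolding strictly_monotone_def
  by (cases "y = z") (auto intro: less_imp_le)

lemma gap_nonneg: "gap y \<ge> 0"
  unfolding gap_def by (rule pg_monotone)

lemma gap_pos: "y \<noteq> xs \<Longrightarrow> gap y > 0"
  using pg_strictly_monotone unfolding gap_def strictly_monotone_def by auto

lemma gap_eq_sum: "gap y = (\<Sum>k\<in>UNIV. (y $ k - xs $ k) * pg y $ k)"
  unfolding gap_def inner_vec_def using pg_nash_eq_0 by simp

lemma gap_along_ray_le:
  assumes "0 < t" "t \<le> 1"
  shows "gap (xs + t *\<^sub>R (y - xs)) \<le> gap y"
proof -
  define u where "u = y - xs"
  define z where "z = xs + t *\<^sub>R u"
  have gap_z: "gap z = t * (u \<bullet> (pg z - pg xs))"
    unfolding gap_def z_def by simp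
  then have inner_z: "u \<bullet> (pg z - pg xs) \<ge> 0"
    using gap_nonneg[of z] assms by (simp add: zero_le_mult_iff)
  have "y - z = (1 - t) *\<^sub>R u"
    unfolding z_def u_def by (simp add: algebra_simps)
  then have "(1 - t) * (u \<bullet> (pg y - pg z)) \<ge> 0"
    using pg_monotone[of y z] by simp
  then have inner_yz: "u \<bullet> (pg y - pg z) \<ge> 0" if "t < 1"
    using that by (simp add: zero_le_mult_iff)
  have "u \<bullet> (pg y - pg z) \<ge> 0"
  proof (cases "t = 1")
    case True
    then show ?thesis
      by (simp add: z_def u_def)
  qed (use inner_yz assms in simp)
  have "gap y = u \<bullet> (pg y - pg z) + u \<bullet> (pg z - pg xs)"
    unfolding gap_def u_def by (simp add: inner_diff_right)
  moreover have "t * (u \<bullet> (pg z - pg xs)) \<le> u \<bullet> (pg z - pg xs)"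
    using inner_z assms by (simp add: mult_left_le_one_le)
  ultimately show ?thesis
    using gap_z \<open>u \<bullet> (pg y - pg z) \<ge> 0\<close> unfolding z_def u_def by linarith
qed

lemma continuous_on_gap: "continuous_on S gap"
  unfolding gap_eq_sum
  by (intro continuous_intros continuous_on_pg_component)

text \<open>The weights n_k / dbar_k turn the x-part of the Lyapunov derivative into
  - 2 \<delta> gap x, up to the consensus errors.\<close>

definition weight :: "'a \<Rightarrow> real" where
  "weight k = real (n k) / dbar k"

definition wdist :: "real^'a \<Rightarrow> real" where
  "wdist y = (\<Sum>k\<in>UNIV. weight k * (y $ k - xs $ k)\<^sup>2)"

definition "weight_min = Min (range weight)"
definition "weight_max = Max (range weight)"

lemma weight_pos: "weight k > 0"
  unfolding weight_def using n_pos dbar_pos by simp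

lemma weight_min_pos: "weight_min > 0"
  unfolding weight_min_def using weight_pos by simp

lemma weight_min_le_wdist: "weight_min * (norm (y - xs))\<^sup>2 \<le> wdist y"
  unfolding wdist_def norm_vec_power2 sum_distrib_left weight_min_def
  by (intro sum_mono) (simp add: mult_right_mono)

lemma wdist_le_weight_max: "wdist y \<le> weight_max * (norm (y - xs))\<^sup>2"
  unfolding wdist_def norm_vec_power2 sum_distrib_left weight_max_def
  by (intro sum_mono) (simp add: mult_right_mono)

lemma dist_le_if_wdist_le: "wdist y \<le> r \<Longrightarrow> norm (y - xs) \<le> sqrt (max r 0 / weight_min)"
  using weight_min_le_wdist[of y] weight_min_pos
  by (intro real_le_rsqrt) (auto simp: field_simps)

lemma norm_power2_le_if_wdist_le: "wdist y \<le> r \<Longrightarrow> (norm (y - xs))\<^sup>2 \<le> max r 0 / weight_min"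
  using weight_min_le_wdist[of y] weight_min_pos by (simp add: field_simps)

lemma continuous_on_wdist: "continuous_on S wdist"
  unfolding wdist_def by (intro continuous_intros)

lemma wdist_along_ray: "wdist (xs + t *\<^sub>R (y - xs)) = t\<^sup>2 * wdist y"
  unfolding wdist_def sum_distrib_left
  by (rule sum.cong) (simp_all add: power2_eq_square algebra_simps)

lemma wdist_surj:
  assumes "q \<ge> 0"
  obtains y where "wdist y = q"
proof -
  fix k0 :: 'a
  define y where "y = xs + sqrt (q / weight k0) *\<^sub>R axis k0 1"
  have "wdist y = (\<Sum>k\<in>UNIV. if k = k0 then weight k0 * (sqrt (q / weight k0))\<^sup>2 else 0)"
    unfolding wdist_def y_def by (rule sum.cong) (auto simp: axis_def)
  also have "\<dots> = q"
    using assms weight_pos[of k0] by simp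
  finally show ?thesis
    using that by blast
qed

lemma gap_bounded_below_off_ball:
  assumes "q > 0"
  shows "\<exists>m>0. \<forall>y. q \<le> wdist y \<longrightarrow> m \<le> gap y"
proof -
  define S where "S = {y. wdist y = q}"
  have "S \<subseteq> cball xs (sqrt (q / weight_min))"
  proof
    fix y
    assume "y \<in> S"
    then have "norm (y - xs) \<le> sqrt (max q 0 / weight_min)"
      using dist_le_if_wdist_le by (simp add: S_def)
    then show "y \<in> cball xs (sqrt (q / weight_min))"
      using assms by (simp add: dist_norm norm_minus_commute)
  qed
  moreover have "closed S"
    unfolding S_def by (intro closed_Collect_eq continuous_on_wdist continuous_on_const)
  ultimately have "compact S"
    using bounded_subset[OF bounded_cball] by (simp add: compact_eq_bounded_closed)
  moreover obtain y0 where "wdist y0 = q"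
    using wdist_surj[of q] assms by auto
  ultimately obtain y1 where y1: "y1 \<in> S" "\<forall>y\<in>S. gap y1 \<le> gap y"
    using continuous_attains_inf[OF _ _ continuous_on_gap] unfolding S_def by blast
  have "y1 \<noteq> xs"
    using y1 assms by (auto simp: S_def wdist_def)
  show ?thesis
  proof (intro exI[of _ "gap y1"] conjI allI impI)
    show "gap y1 > 0"
      using gap_pos \<open>y1 \<noteq> xs\<close> by blast
    fix y
    assume y: "q \<le> wdist y"
    define t where "t = sqrt (q / wdist y)"
    have t: "0 < t" "t \<le> 1"
      unfolding t_def using y assms by (auto simp: real_sqrt_le_1_iff)
    have "wdist (xs + t *\<^sub>R (y - xs)) = q"
      unfolding wdist_along_ray t_def using y assms by simp
    then have "gap y1 \<le> gap (xs + t *\<^sub>R (y - xs))"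
      using y1 by (simp add: S_def)
    also have "\<dots> \<le> gap y"
      by (rule gap_along_ray_le[OF t])
    finally show "gap y1 \<le> gap y" .
  qed
qed

definition min_gap :: "real \<Rightarrow> real" where
  "min_gap q = Inf (gap ` {y. q \<le> wdist y})"

lemma min_gap_le: "q \<le> wdist y \<Longrightarrow> min_gap q \<le> gap y"
  unfolding min_gap_def by (rule cInf_lower) (auto intro!: bdd_belowI[of _ 0] gap_nonneg)

lemma min_gap_pos: "q > 0 \<Longrightarrow> min_gap q > 0"
proof -
  assume "q > 0"
  then obtain m where m: "m > 0" "\<forall>y. q \<le> wdist y \<longrightarrow> m \<le> gap y"
    using gap_bounded_below_off_ball by blast
  obtain y0 where "wdist y0 = q"
    using wdist_surj[of q] \<open>q > 0\<close> by auto
  then have "m \<le> min_gap q"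
    unfolding min_gap_def using m by (intro cInf_greatest) auto
  then show ?thesis
    using m by simp
qed

lemma min_gap_mono: "0 < q1 \<Longrightarrow> q1 \<le> q2 \<Longrightarrow> min_gap q1 \<le> min_gap q2"
proof -
  assume "0 < q1" "q1 \<le> q2"
  moreover obtain y0 where "wdist y0 = q2"
    using wdist_surj[of q2] \<open>0 < q1\<close> \<open>q1 \<le> q2\<close> by auto
  ultimately show ?thesis
    unfolding min_gap_def by (intro cInf_superset_mono) (auto intro!: bdd_belowI[of _ 0] gap_nonneg)
qed

lemma uniform_algebraic_connectivity:
  "\<exists>\<mu>>0. \<forall>k y. \<mu> * (\<Sum>j\<in>V k. (y j - (\<Sum>l\<in>V k. y l) / n k)\<^sup>2) \<le> laplacian_form (V k) A y"
proof -
  have "\<forall>k. \<exists>\<mu>>0. \<forall>y. \<mu> * (\<Sum>j\<in>V k. (y j - (\<Sum>l\<in>V k. y l) / n k)\<^sup>2) \<le> laplacian_form (V k) A y"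
    using laplacian_form_ge_variance[OF _ comm_connected[rule_format] A_nonneg_on_cvert] by simp
  then obtain \<mu> where \<mu>: "\<forall>k. \<mu> k > 0 \<and>
      (\<forall>y. \<mu> k * (\<Sum>j\<in>V k. (y j - (\<Sum>l\<in>V k. y l) / n k)\<^sup>2) \<le> laplacian_form (V k) A y)"
    by metis
  have "Min (range \<mu>) * (\<Sum>j\<in>V k. (y j - (\<Sum>l\<in>V k. y l) / n k)\<^sup>2) \<le> laplacian_form (V k) A y" for k y
  proof -
    have "Min (range \<mu>) * (\<Sum>j\<in>V k. (y j - (\<Sum>l\<in>V k. y l) / n k)\<^sup>2)
        \<le> \<mu> k * (\<Sum>j\<in>V k. (y j - (\<Sum>l\<in>V k. y l) / n k)\<^sup>2)"
      by (intro mult_right_mono sum_nonneg) auto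
    then show ?thesis
      using \<mu> order_trans by blast
  qed
  moreover have "Min (range \<mu>) > 0"
    using \<mu> by simp
  ultimately show ?thesis
    by blast
qed

definition alg_conn :: real where
  "alg_conn = (SOME \<mu>. \<mu> > 0 \<and>
      (\<forall>k y. \<mu> * (\<Sum>j\<in>V k. (y j - (\<Sum>l\<in>V k. y l) / n k)\<^sup>2) \<le> laplacian_form (V k) A y))"

lemma alg_conn_pos: "alg_conn > 0"
  and laplacian_form_ge_alg_conn:
    "alg_conn * (\<Sum>j\<in>V k. (y j - (\<Sum>l\<in>V k. y l) / n k)\<^sup>2) \<le> laplacian_form (V k) A y"
  using someI_ex[OF uniform_algebraic_connectivity] unfolding alg_conn_def by blast+

section \<open>The Lyapunov derivative\<close>

text \<open>The Lyapunov function is cons_err g + wdist x.  Its derivative along the dynamics is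
  expressed at an arbitrary state (xv, gv), where gv j k stands for g_jk; the derivative of
  g_jk is the consensus term plus hess_xdot, the change of the partial derivative of f_j
  along the flow of x.\<close>

definition gmean :: "('a \<Rightarrow> 'a \<Rightarrow> real) \<Rightarrow> 'a \<Rightarrow> real" where
  "gmean gv k = (\<Sum>l\<in>V k. gv l k) / n k"

definition cons_err :: "('a \<Rightarrow> 'a \<Rightarrow> real) \<Rightarrow> real" where
  "cons_err gv = (\<Sum>k\<in>UNIV. \<Sum>j\<in>V k. (gv j k - gmean gv k)\<^sup>2)"

definition xdot :: "real \<Rightarrow> ('a \<Rightarrow> 'a \<Rightarrow> real) \<Rightarrow> real^'a" where
  "xdot \<delta> gv = (\<chi> j. - (\<delta> * dbar j) * gv j j)"

definition hess_xdot :: "real^'a \<Rightarrow> real \<Rightarrow> ('a \<Rightarrow> 'a \<Rightarrow> real) \<Rightarrow> 'a \<Rightarrow> 'a \<Rightarrow> real" where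
  "hess_xdot xv \<delta> gv j k = D2f j xv (xdot \<delta> gv) (axis k 1)"

definition gdot :: "real^'a \<Rightarrow> real \<Rightarrow> ('a \<Rightarrow> 'a \<Rightarrow> real) \<Rightarrow> 'a \<Rightarrow> 'a \<Rightarrow> real" where
  "gdot xv \<delta> gv j k = - (\<Sum>l\<in>V k. A j l * (gv j k - gv l k)) + hess_xdot xv \<delta> gv j k"

definition lyap_dot :: "real^'a \<Rightarrow> real \<Rightarrow> ('a \<Rightarrow> 'a \<Rightarrow> real) \<Rightarrow> real" where
  "lyap_dot xv \<delta> gv = (\<Sum>k\<in>UNIV. 2 * (\<Sum>j\<in>V k. (gv j k - gmean gv k) * gdot xv \<delta> gv j k))
    + (\<Sum>k\<in>UNIV. 2 * weight k * (xv $ k - xs $ k) * xdot \<delta> gv $ k)"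

definition tracks_pg :: "real^'a \<Rightarrow> ('a \<Rightarrow> 'a \<Rightarrow> real) \<Rightarrow> bool" where
  "tracks_pg xv gv \<longleftrightarrow> (\<forall>k. (\<Sum>j\<in>V k. gv j k) = pg xv $ k)"

lemma cons_err_nonneg: "cons_err gv \<ge> 0"
  unfolding cons_err_def by (intro sum_nonneg) auto

lemma diag_err_le_cons_err: "(\<Sum>k\<in>UNIV. (gv k k - gmean gv k)\<^sup>2) \<le> cons_err gv"
  unfolding cons_err_def by (intro sum_mono member_le_sum) (auto simp: self_in_cvert)

lemma n_mult_gmean: "tracks_pg xv gv \<Longrightarrow> real (n k) * gmean gv k = pg xv $ k"
  unfolding tracks_pg_def gmean_def using n_pos[of k] by auto

lemma n_le_card: "real (n k) \<le> real CARD('a)"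
  by (simp add: card_mono)

lemma bounds_on_wdist_sublevel:
  "\<exists>M\<ge>0. \<forall>xv. wdist xv \<le> r \<longrightarrow> (\<forall>j. norm (D2f j xv) \<le> M) \<and> (\<forall>j. \<bar>pg xv $ j\<bar> \<le> M)"
proof -
  define K where "K = cball xs (sqrt (max r 0 / weight_min))"
  define F where "F xv = (\<Sum>j\<in>UNIV. norm (D2f j xv)) + (\<Sum>j\<in>UNIV. \<bar>pg xv $ j\<bar>)" for xv
  have "continuous_on K F"
    unfolding F_def
    by (intro continuous_intros continuous_on_D2f[THEN continuous_on_subset] continuous_on_pg_component) auto
  moreover have "compact K" "K \<noteq> {}"
    unfolding K_def using weight_min_pos by (auto simp: divide_less_0_iff)
  ultimately obtain x0 where x0: "x0 \<in> K" "\<forall>y\<in>K. F y \<le> F x0"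
    using continuous_attains_sup by blast
  show ?thesis
  proof (intro exI[of _ "F x0"] conjI allI impI)
    show "0 \<le> F x0"
      unfolding F_def by (intro add_nonneg_nonneg sum_nonneg) auto
    fix xv j
    assume "wdist xv \<le> r"
    then have "xv \<in> K"
      using dist_le_if_wdist_le[of xv r] unfolding K_def by (simp add: dist_norm norm_minus_commute)
    then have "F xv \<le> F x0"
      using x0 by blast
    moreover have "norm (D2f j xv) \<le> F xv" "\<bar>pg xv $ j\<bar> \<le> F xv"
      unfolding F_def by (intro add_increasing2 add_increasing member_le_sum sum_nonneg; simp)+
    ultimately show "norm (D2f j xv) \<le> F x0" "\<bar>pg xv $ j\<bar> \<le> F x0"
      by linarith+
  qed
qed

lemma consensus_part_le:
  "(\<Sum>k\<in>UNIV. 2 * (\<Sum>j\<in>V k. (gv j k - gmean gv k) * gdot xv \<delta> gv j k))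
     \<le> - alg_conn / 2 * cons_err gv + 2 / alg_conn * (\<Sum>k\<in>UNIV. \<Sum>j\<in>V k. (hess_xdot xv \<delta> gv j k)\<^sup>2)"
proof -
  let ?e = "\<lambda>j k. gv j k - gmean gv k" and ?h = "\<lambda>j k. hess_xdot xv \<delta> gv j k"
  have "2 * (\<Sum>j\<in>V k. ?e j k * gdot xv \<delta> gv j k)
     \<le> - alg_conn / 2 * (\<Sum>j\<in>V k. (?e j k)\<^sup>2) + 2 / alg_conn * (\<Sum>j\<in>V k. (?h j k)\<^sup>2)" for k
  proof -
    have split: "(\<Sum>j\<in>V k. ?e j k * gdot xv \<delta> gv j k)
        = - (\<Sum>j\<in>V k. ?e j k * (\<Sum>l\<in>V k. A j l * (gv j k - gv l k))) + (\<Sum>j\<in>V k. ?e j k * ?h j k)"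
      unfolding gdot_def distrib_left sum.distrib by (simp add: sum_negf)
    have "2 * (\<Sum>j\<in>V k. ?e j k * (\<Sum>l\<in>V k. A j l * (gv j k - gv l k))) = laplacian_form (V k) A (\<lambda>j. gv j k)"
      by (rule laplacian_form_eq[OF A_sym_on_cvert])
    moreover have "alg_conn * (\<Sum>j\<in>V k. (?e j k)\<^sup>2) \<le> laplacian_form (V k) A (\<lambda>j. gv j k)"
      using laplacian_form_ge_alg_conn unfolding gmean_def .
    moreover have "(\<Sum>j\<in>V k. 2 * (?e j k * ?h j k))
        \<le> (\<Sum>j\<in>V k. alg_conn / 2 * (?e j k)\<^sup>2 + (?h j k)\<^sup>2 / (alg_conn / 2))"
      using alg_conn_pos by (intro sum_mono two_mult_le_weighted_squares) simp
    then have "2 * (\<Sum>j\<in>V k. ?e j k * ?h j k)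
        \<le> alg_conn / 2 * (\<Sum>j\<in>V k. (?e j k)\<^sup>2) + (\<Sum>j\<in>V k. (?h j k)\<^sup>2) / (alg_conn / 2)"
      by (simp only: sum.distrib sum_distrib_left sum_divide_distrib)
    ultimately show ?thesis
      unfolding split by (simp add: field_simps)
  qed
  then have "(\<Sum>k\<in>UNIV. 2 * (\<Sum>j\<in>V k. ?e j k * gdot xv \<delta> gv j k))
     \<le> (\<Sum>k\<in>UNIV. - alg_conn / 2 * (\<Sum>j\<in>V k. (?e j k)\<^sup>2) + 2 / alg_conn * (\<Sum>j\<in>V k. (?h j k)\<^sup>2))"
    by (rule sum_mono)
  then show ?thesis
    unfolding cons_err_def by (simp only: sum.distrib sum_distrib_left)
qed

lemma hess_xdot_sq_sum_le:
  assumes "\<forall>j. norm (D2f j xv) \<le> M"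
  shows "(\<Sum>k\<in>UNIV. \<Sum>j\<in>V k. (hess_xdot xv \<delta> gv j k)\<^sup>2)
      \<le> (real CARD('a))\<^sup>2 * M\<^sup>2 * (norm (xdot \<delta> gv))\<^sup>2"
proof -
  have "\<bar>hess_xdot xv \<delta> gv j k\<bar> \<le> M * norm (xdot \<delta> gv)" for j k
  proof -
    have "\<bar>hess_xdot xv \<delta> gv j k\<bar> \<le> norm (D2f j xv (xdot \<delta> gv)) * norm (axis k (1::real))"
      unfolding hess_xdot_def by (metis norm_blinfun real_norm_def)
    also have "\<dots> \<le> norm (D2f j xv) * norm (xdot \<delta> gv)"
      using norm_blinfun by simp
    also have "\<dots> \<le> M * norm (xdot \<delta> gv)"
      using assms by (simp add: mult_right_mono)
    finally show ?thesis .
  qed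
  then have sq: "(hess_xdot xv \<delta> gv j k)\<^sup>2 \<le> M\<^sup>2 * (norm (xdot \<delta> gv))\<^sup>2" for j k
    by (metis abs_ge_zero power2_abs power_mono power_mult_distrib)
  have "(\<Sum>j\<in>V k. (hess_xdot xv \<delta> gv j k)\<^sup>2) \<le> real CARD('a) * (M\<^sup>2 * (norm (xdot \<delta> gv))\<^sup>2)" for k
  proof -
    have "(\<Sum>j\<in>V k. (hess_xdot xv \<delta> gv j k)\<^sup>2) \<le> real (n k) * (M\<^sup>2 * (norm (xdot \<delta> gv))\<^sup>2)"
      using sum_mono[of "V k", OF sq] by simp
    also have "\<dots> \<le> real CARD('a) * (M\<^sup>2 * (norm (xdot \<delta> gv))\<^sup>2)"
      by (intro mult_right_mono n_le_card) auto
    finally show ?thesis .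
  qed
  then have "(\<Sum>k\<in>UNIV. \<Sum>j\<in>V k. (hess_xdot xv \<delta> gv j k)\<^sup>2)
      \<le> (\<Sum>k\<in>(UNIV::'a set). real CARD('a) * (M\<^sup>2 * (norm (xdot \<delta> gv))\<^sup>2))"
    by (rule sum_mono)
  then show ?thesis
    by (simp add: power2_eq_square)
qed

definition "dbar_max = Max (range dbar)"

lemma norm_xdot_sq_le:
  assumes bound: "\<forall>j. \<bar>pg xv $ j\<bar> \<le> M" and tracks: "tracks_pg xv gv"
  shows "(norm (xdot \<delta> gv))\<^sup>2 \<le> \<delta>\<^sup>2 * dbar_max\<^sup>2 * (2 * real CARD('a) * M\<^sup>2 + 2 * cons_err gv)"
proof -
  have gmean_sq: "(gmean gv j)\<^sup>2 \<le> M\<^sup>2" for j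
  proof -
    have "real (n j) * \<bar>gmean gv j\<bar> \<le> M"
      using n_mult_gmean[OF tracks, of j] bound by (metis abs_mult abs_of_nat)
    moreover have "\<bar>gmean gv j\<bar> \<le> real (n j) * \<bar>gmean gv j\<bar>"
      using n_pos[of j] by (simp add: mult_le_cancel_right1)
    ultimately show ?thesis
      by (metis abs_ge_zero order_trans power2_abs power_mono)
  qed
  have "(gv j j)\<^sup>2 \<le> 2 * (gv j j - gmean gv j)\<^sup>2 + 2 * (gmean gv j)\<^sup>2" for j
    using power2_diff_le_triangle[of "gv j j" 0 "gmean gv j"] by simp
  then have "(gv j j)\<^sup>2 \<le> 2 * M\<^sup>2 + 2 * (gv j j - gmean gv j)\<^sup>2" for j
    using gmean_sq[of j] by (smt (verit))
  moreover have "(dbar j)\<^sup>2 \<le> dbar_max\<^sup>2" for j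
    using dbar_pos unfolding dbar_max_def by (intro power_mono) (auto simp: less_imp_le)
  ultimately have xdot_sq: "(xdot \<delta> gv $ j)\<^sup>2 \<le> \<delta>\<^sup>2 * dbar_max\<^sup>2 * (2 * M\<^sup>2 + 2 * (gv j j - gmean gv j)\<^sup>2)" for j
    unfolding xdot_def by (simp add: power_mult_distrib mult_mono)
  have sum_eq: "(\<Sum>j\<in>UNIV. 2 * M\<^sup>2 + 2 * (gv j j - gmean gv j)\<^sup>2)
      = 2 * real CARD('a) * M\<^sup>2 + 2 * (\<Sum>j\<in>UNIV. (gv j j - gmean gv j)\<^sup>2)"
    by (simp add: sum.distrib sum_distrib_left)
  have "(norm (xdot \<delta> gv))\<^sup>2
      \<le> (\<Sum>j\<in>UNIV. \<delta>\<^sup>2 * dbar_max\<^sup>2 * (2 * M\<^sup>2 + 2 * (gv j j - gmean gv j)\<^sup>2))"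
    unfolding norm_vec_power2 using xdot_sq by (rule sum_mono)
  also have "\<dots> = \<delta>\<^sup>2 * dbar_max\<^sup>2 * (2 * real CARD('a) * M\<^sup>2 + 2 * (\<Sum>j\<in>UNIV. (gv j j - gmean gv j)\<^sup>2))"
    by (simp only: sum_distrib_left[symmetric] sum_eq)
  also have "\<dots> \<le> \<delta>\<^sup>2 * dbar_max\<^sup>2 * (2 * real CARD('a) * M\<^sup>2 + 2 * cons_err gv)"
    using diag_err_le_cons_err[of gv] by (intro mult_left_mono) auto
  finally show ?thesis .
qed

lemma hess_xdot_sq_sum_le_quadratic:
  assumes "\<forall>j. norm (D2f j xv) \<le> M" "\<forall>j. \<bar>pg xv $ j\<bar> \<le> M" "tracks_pg xv gv"
  shows "(\<Sum>k\<in>UNIV. \<Sum>j\<in>V k. (hess_xdot xv \<delta> gv j k)\<^sup>2)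
      \<le> (real CARD('a))\<^sup>2 * M\<^sup>2 * dbar_max\<^sup>2 * (2 * real CARD('a) * M\<^sup>2 + 2) * \<delta>\<^sup>2 * (cons_err gv + 1)"
proof -
  define N where "N = real CARD('a)"
  define E where "E = cons_err gv"
  have "(\<Sum>k\<in>UNIV. \<Sum>j\<in>V k. (hess_xdot xv \<delta> gv j k)\<^sup>2) \<le> N\<^sup>2 * M\<^sup>2 * (norm (xdot \<delta> gv))\<^sup>2"
    unfolding N_def using assms(1) by (rule hess_xdot_sq_sum_le)
  also have "\<dots> \<le> N\<^sup>2 * M\<^sup>2 * (\<delta>\<^sup>2 * dbar_max\<^sup>2 * (2 * N * M\<^sup>2 + 2 * E))"
    unfolding N_def E_def using assms(2,3) by (intro mult_left_mono norm_xdot_sq_le) auto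
  also have "\<dots> \<le> N\<^sup>2 * M\<^sup>2 * (\<delta>\<^sup>2 * dbar_max\<^sup>2 * ((2 * N * M\<^sup>2 + 2) * (E + 1)))"
  proof -
    have "0 \<le> N * M\<^sup>2 * E"
      using cons_err_nonneg by (simp add: N_def E_def)
    moreover have "(2 * N * M\<^sup>2 + 2) * (E + 1) = (2 * N * M\<^sup>2 + 2 * E) + (2 * (N * M\<^sup>2 * E) + 2)"
      by (simp add: algebra_simps)
    ultimately show ?thesis
      by (intro mult_left_mono) auto
  qed
  also have "\<dots> = N\<^sup>2 * M\<^sup>2 * dbar_max\<^sup>2 * (2 * N * M\<^sup>2 + 2) * \<delta>\<^sup>2 * (E + 1)"
    by (simp only: mult_ac)
  finally show ?thesis
    unfolding N_def E_def .
qed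

lemma state_part_le:
  assumes tracks: "tracks_pg xv gv" and "\<delta> > 0"
  shows "(\<Sum>k\<in>UNIV. 2 * weight k * (xv $ k - xs $ k) * xdot \<delta> gv $ k)
     \<le> - 2 * \<delta> * gap xv + alg_conn / 4 * cons_err gv
        + 4 / alg_conn * \<delta>\<^sup>2 * (real CARD('a))\<^sup>2 * (norm (xv - xs))\<^sup>2"
proof -
  have term_le: "2 * weight k * (xv $ k - xs $ k) * xdot \<delta> gv $ k
     \<le> - 2 * \<delta> * ((xv $ k - xs $ k) * pg xv $ k) + alg_conn / 4 * (gv k k - gmean gv k)\<^sup>2
        + 4 / alg_conn * \<delta>\<^sup>2 * (real CARD('a))\<^sup>2 * (xv $ k - xs $ k)\<^sup>2" for k
  proof -
    define u where "u = xv $ k - xs $ k"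
    define e where "e = gv k k - gmean gv k"
    have "weight k * dbar k = real (n k)"
      unfolding weight_def using dbar_pos[rule_format, of k] by simp
    then have "2 * weight k * u * xdot \<delta> gv $ k = - 2 * \<delta> * (real (n k) * gv k k) * u"
      unfolding xdot_def by (simp add: algebra_simps)
    also have "real (n k) * gv k k = pg xv $ k + real (n k) * e"
      using n_mult_gmean[OF tracks, of k] unfolding e_def by (simp add: algebra_simps)
    finally have split: "2 * weight k * u * xdot \<delta> gv $ k
        = - 2 * \<delta> * (u * pg xv $ k) + 2 * (e * (- (\<delta> * real (n k) * u)))"
      by (simp add: algebra_simps)
    have "2 * (e * (- (\<delta> * real (n k) * u))) \<le> alg_conn / 4 * e\<^sup>2 + (- (\<delta> * real (n k) * u))\<^sup>2 / (alg_conn / 4)"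
      using alg_conn_pos by (intro two_mult_le_weighted_squares) simp
    also have "(- (\<delta> * real (n k) * u))\<^sup>2 / (alg_conn / 4) = 4 / alg_conn * \<delta>\<^sup>2 * (real (n k))\<^sup>2 * u\<^sup>2"
      by (simp add: power_mult_distrib field_simps)
    also have "\<dots> \<le> 4 / alg_conn * \<delta>\<^sup>2 * (real CARD('a))\<^sup>2 * u\<^sup>2"
      using alg_conn_pos n_le_card[of k] by (intro mult_right_mono mult_left_mono power_mono) auto
    finally show ?thesis
      using split unfolding u_def e_def by linarith
  qed
  have "(\<Sum>k\<in>UNIV. 2 * weight k * (xv $ k - xs $ k) * xdot \<delta> gv $ k)
     \<le> (\<Sum>k\<in>UNIV. - 2 * \<delta> * ((xv $ k - xs $ k) * pg xv $ k) + alg_conn / 4 * (gv k k - gmean gv k)\<^sup>2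
        + 4 / alg_conn * \<delta>\<^sup>2 * (real CARD('a))\<^sup>2 * (xv $ k - xs $ k)\<^sup>2)"
    using term_le by (rule sum_mono)
  also have "\<dots> = - 2 * \<delta> * gap xv + alg_conn / 4 * (\<Sum>k\<in>UNIV. (gv k k - gmean gv k)\<^sup>2)
        + 4 / alg_conn * \<delta>\<^sup>2 * (real CARD('a))\<^sup>2 * (norm (xv - xs))\<^sup>2"
    unfolding gap_eq_sum norm_vec_power2 by (simp only: sum.distrib sum_distrib_left) simp
  also have "\<dots> \<le> - 2 * \<delta> * gap xv + alg_conn / 4 * cons_err gv
        + 4 / alg_conn * \<delta>\<^sup>2 * (real CARD('a))\<^sup>2 * (norm (xv - xs))\<^sup>2"
    using diag_err_le_cons_err[of gv] alg_conn_pos by simp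
  finally show ?thesis .
qed

lemma lyap_dot_le_quadratic:
  "\<exists>K\<ge>0. \<forall>\<delta> xv gv. 0 < \<delta> \<longrightarrow> tracks_pg xv gv \<longrightarrow> wdist xv \<le> r \<longrightarrow>
     lyap_dot xv \<delta> gv \<le> - alg_conn / 4 * cons_err gv - 2 * \<delta> * gap xv + K * \<delta>\<^sup>2 * (cons_err gv + 1)"
proof -
  obtain M where M: "\<forall>xv. wdist xv \<le> r \<longrightarrow> (\<forall>j. norm (D2f j xv) \<le> M) \<and> (\<forall>j. \<bar>pg xv $ j\<bar> \<le> M)"
    using bounds_on_wdist_sublevel by blast
  define N where "N = real CARD('a)"
  define K1 where "K1 = 2 / alg_conn * (N\<^sup>2 * M\<^sup>2 * dbar_max\<^sup>2 * (2 * N * M\<^sup>2 + 2))"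
  define K2 where "K2 = 4 / alg_conn * N\<^sup>2 * (max r 0 / weight_min)"
  have "K1 \<ge> 0" "K2 \<ge> 0"
    unfolding K1_def K2_def N_def using alg_conn_pos weight_min_pos by auto
  show ?thesis
  proof (intro exI[of _ "K1 + K2"] conjI allI impI)
    show "K1 + K2 \<ge> 0"
      using \<open>K1 \<ge> 0\<close> \<open>K2 \<ge> 0\<close> by simp
    fix \<delta> :: real and xv gv
    assume "0 < \<delta>" and tracks: "tracks_pg xv gv" and "wdist xv \<le> r"
    define E where "E = cons_err gv"
    define H where "H = (\<Sum>k\<in>UNIV. \<Sum>j\<in>V k. (hess_xdot xv \<delta> gv j k)\<^sup>2)"
    define X where "X = (norm (xv - xs))\<^sup>2"
    have "H \<le> N\<^sup>2 * M\<^sup>2 * dbar_max\<^sup>2 * (2 * N * M\<^sup>2 + 2) * \<delta>\<^sup>2 * (E + 1)"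
      unfolding H_def N_def E_def using M \<open>wdist xv \<le> r\<close> tracks
      by (intro hess_xdot_sq_sum_le_quadratic) auto
    then have "2 / alg_conn * H \<le> 2 / alg_conn * (N\<^sup>2 * M\<^sup>2 * dbar_max\<^sup>2 * (2 * N * M\<^sup>2 + 2) * \<delta>\<^sup>2 * (E + 1))"
      using alg_conn_pos by (intro mult_left_mono) auto
    then have hess: "2 / alg_conn * H \<le> K1 * \<delta>\<^sup>2 * (E + 1)"
      unfolding K1_def by (simp only: mult_ac)
    have "4 / alg_conn * \<delta>\<^sup>2 * N\<^sup>2 * X \<le> 4 / alg_conn * \<delta>\<^sup>2 * N\<^sup>2 * (max r 0 / weight_min)"
      unfolding X_def using alg_conn_pos norm_power2_le_if_wdist_le[OF \<open>wdist xv \<le> r\<close>]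
      by (intro mult_left_mono) auto
    also have "\<dots> = K2 * \<delta>\<^sup>2 * 1"
      unfolding K2_def by (simp only: mult_ac mult_1_right)
    also have "\<dots> \<le> K2 * \<delta>\<^sup>2 * (E + 1)"
      unfolding E_def using \<open>K2 \<ge> 0\<close> cons_err_nonneg[of gv] by (intro mult_left_mono) auto
    finally have state: "4 / alg_conn * \<delta>\<^sup>2 * N\<^sup>2 * X \<le> K2 * \<delta>\<^sup>2 * (E + 1)" .
    define P1 where "P1 = (\<Sum>k\<in>UNIV. 2 * (\<Sum>j\<in>V k. (gv j k - gmean gv k) * gdot xv \<delta> gv j k))"
    define P2 where "P2 = (\<Sum>k\<in>UNIV. 2 * weight k * (xv $ k - xs $ k) * xdot \<delta> gv $ k)"
    have "P1 \<le> - alg_conn / 2 * E + 2 / alg_conn * H"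
      unfolding P1_def E_def H_def by (rule consensus_part_le)
    moreover have "P2 \<le> - 2 * \<delta> * gap xv + alg_conn / 4 * E + 4 / alg_conn * \<delta>\<^sup>2 * N\<^sup>2 * X"
      unfolding P2_def E_def N_def X_def by (rule state_part_le[OF tracks \<open>0 < \<delta>\<close>])
    ultimately have "P1 + P2 \<le> - alg_conn / 4 * E - 2 * \<delta> * gap xv + (K1 + K2) * \<delta>\<^sup>2 * (E + 1)"
      using hess state by (simp add: algebra_simps)
    then show "lyap_dot xv \<delta> gv \<le> - alg_conn / 4 * cons_err gv - 2 * \<delta> * gap xv + (K1 + K2) * \<delta>\<^sup>2 * (cons_err gv + 1)"
      unfolding lyap_dot_def P1_def P2_def E_def .
  qed
qed

lemma lyap_dot_le:
  "\<exists>C>0. \<exists>\<delta>1>0. \<forall>\<delta> xv gv. 0 < \<delta> \<longrightarrow> \<delta> \<le> \<delta>1 \<longrightarrow> tracks_pg xv gv \<longrightarrow> wdist xv \<le> r \<longrightarrow>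
     lyap_dot xv \<delta> gv \<le> - \<delta> * (alg_conn / 8 * cons_err gv + 2 * gap xv) + C * \<delta>\<^sup>2"
proof -
  obtain K where "K \<ge> 0" and K: "\<forall>\<delta> xv gv. 0 < \<delta> \<longrightarrow> tracks_pg xv gv \<longrightarrow> wdist xv \<le> r \<longrightarrow>
     lyap_dot xv \<delta> gv \<le> - alg_conn / 4 * cons_err gv - 2 * \<delta> * gap xv + K * \<delta>\<^sup>2 * (cons_err gv + 1)"
    using lyap_dot_le_quadratic by blast
  define \<delta>1 where "\<delta>1 = min 1 (alg_conn / (8 * (K + 1)))"
  show ?thesis
  proof (rule exI[of _ "K + 1"], intro conjI exI[of _ \<delta>1] allI impI)
    show "K + 1 > 0" "\<delta>1 > 0"
      unfolding \<delta>1_def using \<open>K \<ge> 0\<close> alg_conn_pos by auto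
    fix \<delta> :: real and xv gv
    assume \<delta>: "0 < \<delta>" "\<delta> \<le> \<delta>1" and "tracks_pg xv gv" "wdist xv \<le> r"
    define E where "E = cons_err gv"
    have "E \<ge> 0"
      unfolding E_def by (rule cons_err_nonneg)
    have "\<delta> \<le> 1"
      using \<delta> unfolding \<delta>1_def by simp
    have "K * \<delta>\<^sup>2 \<le> K * \<delta>"
      using \<delta> \<open>\<delta> \<le> 1\<close> \<open>K \<ge> 0\<close> by (intro mult_left_mono) (auto simp: power2_eq_square)
    also have "\<dots> \<le> K * (alg_conn / (8 * (K + 1)))"
      using \<delta> \<open>K \<ge> 0\<close> unfolding \<delta>1_def by (intro mult_left_mono) auto
    also have "\<dots> \<le> alg_conn / 8"
      using \<open>K \<ge> 0\<close> alg_conn_pos by (simp add: field_simps)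
    finally have KE: "K * \<delta>\<^sup>2 * E \<le> alg_conn / 8 * E"
      using \<open>E \<ge> 0\<close> by (rule mult_right_mono)
    have \<delta>E: "\<delta> * (alg_conn / 8 * E) \<le> alg_conn / 8 * E"
      using \<delta> \<open>\<delta> \<le> 1\<close> \<open>E \<ge> 0\<close> alg_conn_pos by (intro mult_left_le_one_le) auto
    have "lyap_dot xv \<delta> gv \<le> - alg_conn / 4 * E - 2 * \<delta> * gap xv + K * \<delta>\<^sup>2 * E + K * \<delta>\<^sup>2"
      using K \<delta> \<open>tracks_pg xv gv\<close> \<open>wdist xv \<le> r\<close> unfolding E_def by (simp add: algebra_simps)
    also have "\<dots> \<le> - alg_conn / 4 * E + alg_conn / 8 * E - 2 * \<delta> * gap xv + K * \<delta>\<^sup>2"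
      using KE by linarith
    also have "\<dots> = - (alg_conn / 8 * E) - 2 * \<delta> * gap xv + K * \<delta>\<^sup>2"
      by (simp add: field_simps)
    also have "\<dots> \<le> - (\<delta> * (alg_conn / 8 * E)) - 2 * \<delta> * gap xv + K * \<delta>\<^sup>2"
      using \<delta>E by linarith
    also have "\<dots> \<le> - \<delta> * (alg_conn / 8 * E + 2 * gap xv) + (K + 1) * \<delta>\<^sup>2"
      by (simp add: algebra_simps)
    finally show "lyap_dot xv \<delta> gv \<le> - \<delta> * (alg_conn / 8 * cons_err gv + 2 * gap xv) + (K + 1) * \<delta>\<^sup>2"
      unfolding E_def .
  qed
qed

lemma chi_norm_eq: "chi_norm c f R xs xv wv = sqrt (cons_err (gval f xv wv) + (norm (xv - xs))\<^sup>2)"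
proof -
  have "(\<Sum>p<n k - 1. (\<Sum>j\<in>V k. R k j p * gval f xv wv j k)\<^sup>2)
      = (\<Sum>j\<in>V k. (gval f xv wv j k - gmean (gval f xv wv) k)\<^sup>2)" for k
    unfolding gmean_def
    using R_orth self_in_cvert[of k c f] unfolding orth_compl_def
    by (intro orth_compl_sum_sq_coords) auto
  then show ?thesis
    unfolding chi_norm_def cons_err_def by simp
qed

lemma chi_norm_nonneg: "chi_norm c f R xs xv wv \<ge> 0"
  unfolding chi_norm_eq using cons_err_nonneg by simp

text \<open>Above the level r the Lyapunov function decreases at rate \<delta> * rate r: either the
  consensus error or, through min_gap, the distance to the equilibrium is large.\<close>

definition rate :: "real \<Rightarrow> real" where
  "rate r = min (alg_conn / 32 * r) (min_gap (r / 2))"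

lemma decay_rate_rate: "decay_rate rate"
proof
  fix a b :: real
  assume "0 < a" "a \<le> b"
  then show "rate a \<le> rate b"
    unfolding rate_def using alg_conn_pos min_gap_mono[of "a / 2" "b / 2"]
    by (intro min.mono) auto
next
  fix a :: real
  assume "0 < a"
  then show "rate a > 0"
    unfolding rate_def using alg_conn_pos min_gap_pos[of "a / 2"] by simp
qed

sublocale decay_rate rate
  by (rule decay_rate_rate)

lemma rate_le_decrease:
  assumes "tracks_pg xv gv" "0 < cons_err gv + wdist xv"
  shows "2 * rate (cons_err gv + wdist xv) \<le> alg_conn / 8 * cons_err gv + 2 * gap xv"
proof (cases "cons_err gv \<ge> (cons_err gv + wdist xv) / 2")
  case True
  have "2 * rate (cons_err gv + wdist xv) \<le> 2 * (alg_conn / 32 * (cons_err gv + wdist xv))"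
    unfolding rate_def by simp
  also have "\<dots> \<le> alg_conn / 8 * cons_err gv"
    using True alg_conn_pos by (simp add: field_simps)
  finally show ?thesis
    using gap_nonneg[of xv] by simp
next
  case False
  then have "min_gap ((cons_err gv + wdist xv) / 2) \<le> gap xv"
    by (intro min_gap_le) simp
  then have "2 * rate (cons_err gv + wdist xv) \<le> 2 * gap xv"
    unfolding rate_def by simp
  then show ?thesis
    using cons_err_nonneg[of gv] alg_conn_pos by (simp add: add_increasing)
qed

section \<open>Solutions of the seeking dynamics\<close>

context
  fixes \<delta> :: real and x :: "real \<Rightarrow> real^'a" and w :: "'a \<Rightarrow> 'a \<Rightarrow> real \<Rightarrow> real"
  assumes sol: "seeking_solution c f A (\<lambda>a. \<delta> * dbar a) x w"
begin

definition gsol :: "real \<Rightarrow> 'a \<Rightarrow> 'a \<Rightarrow> real" where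
  "gsol t = gval f (x t) (\<lambda>p q. w p q t)"

definition lyap :: "real \<Rightarrow> real" where
  "lyap t = cons_err (gsol t) + wdist (x t)"

lemma gsol_eq: "gsol t j k = w j k t + partial (f j) k (x t)"
  unfolding gsol_def gval_def ..

lemma has_vector_derivative_x:
  "t \<ge> 0 \<Longrightarrow> (x has_vector_derivative xdot \<delta> (gsol t)) (at t within {0..})"
  using sol unfolding seeking_solution_def xdot_def gsol_def by simp

lemma has_real_derivative_x_component:
  assumes "t \<ge> 0"
  shows "((\<lambda>s. x s $ k) has_real_derivative xdot \<delta> (gsol t) $ k) (at t within {0..})"
  using bounded_linear.has_derivative[OF bounded_linear_vec_nth
      has_vector_derivative_x[OF assms, unfolded has_vector_derivative_def]]
  by (rule has_derivative_imp_has_field_derivative) simp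

lemma has_real_derivative_partial:
  assumes "t \<ge> 0"
  shows "((\<lambda>s. partial (f j) k (x s)) has_real_derivative hess_xdot (x t) \<delta> (gsol t) j k) (at t within {0..})"
proof -
  have "(Df j has_derivative D2f j (x t)) (at (x t) within x ` {0..})"
    using has_derivative_D2f by (rule has_derivative_at_withinI)
  with has_vector_derivative_x[OF assms, unfolded has_vector_derivative_def]
  have "((\<lambda>s. Df j (x s)) has_derivative (\<lambda>h. D2f j (x t) (h *\<^sub>R xdot \<delta> (gsol t)))) (at t within {0..})"
    by (rule diff_chain_within[unfolded o_def])
  then have "((\<lambda>s. Df j (x s) (axis k 1)) has_derivative
      (\<lambda>h. D2f j (x t) (h *\<^sub>R xdot \<delta> (gsol t)) (axis k 1))) (at t within {0..})"
    by (rule bounded_linear.has_derivative[OF bounded_linear_apply_blinfun])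
  then show ?thesis
    unfolding partial_eq_Df hess_xdot_def
    by (rule has_derivative_imp_has_field_derivative) (simp add: blinfun.scaleR_right blinfun.scaleR_left)
qed

lemma has_real_derivative_w:
  assumes "j \<in> V k" "t \<ge> 0"
  shows "(w j k has_real_derivative - (\<Sum>l\<in>V k. A j l * (gsol t j k - gsol t l k))) (at t within {0..})"
  using sol assms cvert_sym unfolding seeking_solution_def gsol_def by blast

lemma w_0: "j \<in> V k \<Longrightarrow> w j k 0 = 0"
  using sol cvert_sym unfolding seeking_solution_def by blast

lemma has_real_derivative_gsol:
  assumes "j \<in> V k" "t \<ge> 0"
  shows "((\<lambda>s. gsol s j k) has_real_derivative gdot (x t) \<delta> (gsol t) j k) (at t within {0..})"
proof -
  have "(\<lambda>s. gsol s j k) = (\<lambda>s. w j k s + partial (f j) k (x s))"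
    by (simp add: fun_eq_iff gsol_eq)
  then show ?thesis
    unfolding gdot_def
    using DERIV_add[OF has_real_derivative_w[OF assms] has_real_derivative_partial[OF assms(2)]] by simp
qed

text \<open>The consensus dynamics preserve the sums over V k, so g tracks the pseudo-gradient.\<close>

lemma tracks_pg_gsol:
  assumes "t \<ge> 0"
  shows "tracks_pg (x t) (gsol t)"
proof -
  have "(\<Sum>j\<in>V k. w j k t) = 0" for k
  proof -
    have deriv: "((\<lambda>s. \<Sum>j\<in>V k. w j k s) has_real_derivative 0) (at s within {0..})" if "s \<in> {0..}" for s
    proof -
      have "((\<lambda>s. \<Sum>j\<in>V k. w j k s) has_real_derivative
          (\<Sum>j\<in>V k. - (\<Sum>l\<in>V k. A j l * (gsol s j k - gsol s l k)))) (at s within {0..})"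
        using that by (intro DERIV_sum has_real_derivative_w) auto
      moreover have "(\<Sum>j\<in>V k. - (\<Sum>l\<in>V k. A j l * (gsol s j k - gsol s l k))) = 0"
        using laplacian_rows_sum_eq_0[OF A_sym_on_cvert] by (simp add: sum_negf)
      ultimately show ?thesis
        by simp
    qed
    have "\<exists>C. \<forall>s\<in>{0..}. (\<Sum>j\<in>V k. w j k s) = C"
      using deriv by (intro has_field_derivative_zero_constant) (auto simp: convex_real_interval)
    then obtain C where C: "\<forall>s\<in>{0..}. (\<Sum>j\<in>V k. w j k s) = C"
      by blast
    then have "(\<Sum>j\<in>V k. w j k t) = (\<Sum>j\<in>V k. w j k 0)"
      using assms by simp
    then show ?thesis
      using w_0 by simp
  qed
  then show ?thesis
    unfolding tracks_pg_def gsol_eq pg_eq_sum_cvert partial_eq_Df by (simp add: sum.distrib)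
qed

lemma has_real_derivative_lyap:
  assumes "t \<ge> 0"
  shows "(lyap has_real_derivative lyap_dot (x t) \<delta> (gsol t)) (at t within {0..})"
proof -
  define gd where "gd j k = gdot (x t) \<delta> (gsol t) j k" for j k
  define md where "md k = (\<Sum>l\<in>V k. gd l k) / real (n k)" for k
  define e where "e j k = gsol t j k - gmean (gsol t) k" for j k
  have "((\<lambda>s. gmean (gsol s) k) has_real_derivative md k) (at t within {0..})" for k
    unfolding gmean_def md_def gd_def by (intro DERIV_cdivide DERIV_sum has_real_derivative_gsol assms)
  then have cons_err_raw: "((\<lambda>s. cons_err (gsol s)) has_real_derivative
      (\<Sum>k\<in>UNIV. \<Sum>j\<in>V k. 2 * ((gd j k - md k) * e j k))) (at t within {0..})"
    unfolding cons_err_def gd_def e_def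
    by (auto intro!: derivative_eq_intros has_real_derivative_gsol assms)
  have "(\<Sum>j\<in>V k. 2 * ((gd j k - md k) * e j k)) = 2 * (\<Sum>j\<in>V k. e j k * gd j k)" for k
  proof -
    have "(\<Sum>j\<in>V k. 2 * ((gd j k - md k) * e j k)) = (\<Sum>j\<in>V k. 2 * (e j k * gd j k) - 2 * md k * e j k)"
      by (intro sum.cong refl) (simp add: algebra_simps)
    also have "\<dots> = 2 * (\<Sum>j\<in>V k. e j k * gd j k) - 2 * md k * (\<Sum>j\<in>V k. e j k)"
      by (simp only: sum_subtractf sum_distrib_left[symmetric])
    also have "(\<Sum>j\<in>V k. e j k) = 0"
      unfolding e_def gmean_def by (rule sum_dev_mean_eq_0) (use self_in_cvert in auto)
    finally show ?thesis
      by simp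
  qed
  then have "((\<lambda>s. cons_err (gsol s)) has_real_derivative
      (\<Sum>k\<in>UNIV. 2 * (\<Sum>j\<in>V k. e j k * gd j k))) (at t within {0..})"
    using cons_err_raw by simp
  moreover have "((\<lambda>s. wdist (x s)) has_real_derivative
      (\<Sum>k\<in>UNIV. 2 * weight k * (x t $ k - xs $ k) * xdot \<delta> (gsol t) $ k)) (at t within {0..})"
    unfolding wdist_def
    by (auto intro!: derivative_eq_intros has_real_derivative_x_component assms simp: algebra_simps)
  ultimately show ?thesis
    unfolding lyap_def[abs_def] lyap_dot_def gd_def[symmetric] e_def[symmetric] by (rule DERIV_add)
qed

lemma chi_norm_power2: "(chi_norm c f R xs (x t) (\<lambda>j k. w j k t))\<^sup>2 = cons_err (gsol t) + (norm (x t - xs))\<^sup>2"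
  unfolding chi_norm_eq gsol_def using cons_err_nonneg by simp

lemma lyap_ge_chi_norm: "min 1 weight_min * (chi_norm c f R xs (x t) (\<lambda>j k. w j k t))\<^sup>2 \<le> lyap t"
proof -
  have "min 1 weight_min * cons_err (gsol t) \<le> cons_err (gsol t)"
    using cons_err_nonneg weight_min_pos by (intro mult_left_le_one_le) auto
  moreover have "min 1 weight_min * (norm (x t - xs))\<^sup>2 \<le> wdist (x t)"
    using weight_min_le_wdist[of "x t"] by (meson min.cobounded2 mult_right_mono order_trans zero_le_power2)
  ultimately show ?thesis
    unfolding chi_norm_power2 lyap_def by (simp add: distrib_left)
qed

lemma lyap_le_chi_norm: "lyap t \<le> max 1 weight_max * (chi_norm c f R xs (x t) (\<lambda>j k. w j k t))\<^sup>2"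
proof -
  have "cons_err (gsol t) \<le> max 1 weight_max * cons_err (gsol t)"
    using cons_err_nonneg[of "gsol t"] by (simp add: mult_le_cancel_right1)
  moreover have "wdist (x t) \<le> max 1 weight_max * (norm (x t - xs))\<^sup>2"
    using wdist_le_weight_max[of "x t"] by (meson max.cobounded2 mult_right_mono order_trans zero_le_power2)
  ultimately show ?thesis
    unfolding chi_norm_power2 lyap_def by (simp add: distrib_left)
qed

lemma chi_norm_le_kl_bound:
  assumes lyap_t: "lyap t \<le> \<eta> + kl_envelope rate (lyap 0) s"
    and "0 \<le> \<eta>" "\<eta> \<le> min 1 weight_min * v\<^sup>2" "0 \<le> v"
  shows "chi_norm c f R xs (x t) (\<lambda>j k. w j k t)
    \<le> kl_bound (1 / min 1 weight_min) (max 1 weight_max) (chi_norm c f R xs (x 0) (\<lambda>j k. w j k 0)) s + v"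
proof -
  define chi where "chi s = chi_norm c f R xs (x s) (\<lambda>j k. w j k s)" for s
  define c1 where "c1 = min 1 weight_min"
  define L where "L = max 1 weight_max"
  have "c1 > 0"
    unfolding c1_def using weight_min_pos by simp
  have "c1 * (chi t)\<^sup>2 \<le> lyap t"
    unfolding chi_def c1_def by (rule lyap_ge_chi_norm)
  also have "\<dots> \<le> \<eta> + kl_envelope rate (L * (chi 0)\<^sup>2) s"
    using lyap_t kl_envelope_mono[OF lyap_le_chi_norm[of 0], where s = s] unfolding chi_def L_def
    by linarith
  finally have "sqrt ((chi t)\<^sup>2) \<le> v + sqrt (kl_envelope rate (L * (chi 0)\<^sup>2) s / c1)"
    using assms \<open>c1 > 0\<close> kl_envelope_nonneg unfolding c1_def
    by (intro sqrt_le_add_sqrt_if_mult_le) auto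
  moreover have "chi 0 \<ge> 0" "chi t \<ge> 0"
    unfolding chi_def by (rule chi_norm_nonneg)+
  ultimately have "chi t \<le> v + sqrt (kl_envelope rate (L * (chi 0)\<^sup>2) s / c1)"
    by simp
  moreover have "0 \<le> chi 0 * exp (- s)"
    using \<open>chi 0 \<ge> 0\<close> by simp
  ultimately have "chi t \<le> kl_bound (1 / c1) L (chi 0) s + v"
    unfolding kl_bound_def by simp
  then show ?thesis
    unfolding chi_def c1_def L_def .
qed

end

context
  fixes \<delta> :: real and x :: "real \<Rightarrow> real^'a" and w :: "'a \<Rightarrow> 'a \<Rightarrow> real \<Rightarrow> real"
    and r C \<delta>1 \<eta> :: real
  assumes sol: "seeking_solution c f A (\<lambda>a. \<delta> * dbar a) x w"
    and lyap_dot_bound: "\<forall>\<delta> xv gv. 0 < \<delta> \<longrightarrow> \<delta> \<le> \<delta>1 \<longrightarrow> tracks_pg xv gv \<longrightarrow> wdist xv \<le> r \<longrightarrow>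
       lyap_dot xv \<delta> gv \<le> - \<delta> * (alg_conn / 8 * cons_err gv + 2 * gap xv) + C * \<delta>\<^sup>2"
    and \<delta>: "0 < \<delta>" "\<delta> \<le> \<delta>1" "C * \<delta> \<le> rate \<eta>"
    and \<eta>: "0 < \<eta>" "\<eta> < r"
begin

lemma lyap_dot_le_neg_rate:
  assumes "s \<ge> 0" "\<eta> \<le> \<theta>" "\<theta> \<le> lyap x w s" "lyap x w s \<le> r"
  shows "lyap_dot (x s) \<delta> (gsol x w s) \<le> - (\<delta> * rate \<theta>)"
proof -
  define E where "E = cons_err (gsol x w s)"
  have lyap_eq: "lyap x w s = E + wdist (x s)"
    unfolding E_def by (rule lyap_def[OF sol])
  have tracks: "tracks_pg (x s) (gsol x w s)"
    by (rule tracks_pg_gsol[OF sol \<open>s \<ge> 0\<close>])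
  have "wdist (x s) \<le> r"
    using lyap_eq cons_err_nonneg[of "gsol x w s"] assms(4) unfolding E_def by linarith
  then have bound: "lyap_dot (x s) \<delta> (gsol x w s) \<le> - \<delta> * (alg_conn / 8 * E + 2 * gap (x s)) + C * \<delta>\<^sup>2"
    using lyap_dot_bound[rule_format, OF \<delta>(1,2) tracks] unfolding E_def by blast
  have "2 * rate (lyap x w s) \<le> alg_conn / 8 * E + 2 * gap (x s)"
    unfolding lyap_eq E_def by (rule rate_le_decrease[OF tracks]) (use assms lyap_eq \<eta> E_def in auto)
  moreover have "rate \<eta> \<le> rate \<theta>" "rate \<theta> \<le> rate (lyap x w s)"
    using assms \<eta> by (auto intro!: rate_mono)
  ultimately have "\<delta> * (2 * rate \<theta>) \<le> \<delta> * (alg_conn / 8 * E + 2 * gap (x s))"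
    using \<delta>(1) by (intro mult_left_mono) auto
  moreover have "C * \<delta>\<^sup>2 \<le> rate \<theta> * \<delta>"
  proof -
    have "C * \<delta>\<^sup>2 = (C * \<delta>) * \<delta>"
      by (simp add: power2_eq_square)
    also have "\<dots> \<le> rate \<theta> * \<delta>"
      using \<delta> \<open>rate \<eta> \<le> rate \<theta>\<close> by (intro mult_right_mono) auto
    finally show ?thesis .
  qed
  ultimately show ?thesis
    using bound by (simp add: algebra_simps)
qed

lemma lyap_le_max_initial:
  assumes "lyap x w 0 < r" "t \<ge> 0"
  shows "lyap x w t \<le> max (lyap x w 0) \<eta>"
proof (rule le_if_deriv_nonpos_in_band[of 0 t _ "\<lambda>s. lyap_dot (x s) \<delta> (gsol x w s)" _ r])
  show "\<forall>s\<in>{0..t}. (lyap x w has_real_derivative lyap_dot (x s) \<delta> (gsol x w s)) (at s within {0..t})"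
    using has_real_derivative_lyap[OF sol] by (auto intro: has_real_derivative_within_Icc)
  show "\<forall>s\<in>{0..t}. max (lyap x w 0) \<eta> \<le> lyap x w s \<and> lyap x w s \<le> r \<longrightarrow> lyap_dot (x s) \<delta> (gsol x w s) \<le> 0"
  proof (intro ballI impI)
    fix s
    assume "s \<in> {0..t}" "max (lyap x w 0) \<eta> \<le> lyap x w s \<and> lyap x w s \<le> r"
    then have "lyap_dot (x s) \<delta> (gsol x w s) \<le> - (\<delta> * rate (max (lyap x w 0) \<eta>))"
      by (intro lyap_dot_le_neg_rate) auto
    moreover have "rate (max (lyap x w 0) \<eta>) > 0"
      using \<eta> by (intro rate_pos) simp
    then have "\<delta> * rate (max (lyap x w 0) \<eta>) > 0"
      using \<delta>(1) by simp
    ultimately show "lyap_dot (x s) \<delta> (gsol x w s) \<le> 0"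
      by linarith
  qed
qed (use assms \<eta> in auto)

lemma lyap_le_kl_envelope:
  assumes "lyap x w 0 < r" "t \<ge> 0"
  shows "lyap x w t \<le> \<eta> + kl_envelope rate (lyap x w 0) (\<delta> * t)"
proof (rule le_add_kl_envelope)
  show "0 < \<eta>" "0 \<le> \<delta> * t"
    using \<eta> \<delta> assms by auto
  fix \<theta>
  assume "\<eta> \<le> \<theta>"
  show "lyap x w t \<le> max \<theta> (lyap x w 0 - rate \<theta> * (\<delta> * t))"
  proof (cases "\<theta> < r")
    case False
    then show ?thesis
      using lyap_le_max_initial[OF assms] assms \<eta> by auto
  next
    case True
    have "lyap x w t \<le> max \<theta> (lyap x w 0 - \<delta> * rate \<theta> * t)"
    proof (rule le_max_linear_decay)
      show "\<forall>s\<ge>0. (lyap x w has_real_derivative lyap_dot (x s) \<delta> (gsol x w s)) (at s within {0..})"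
        using has_real_derivative_lyap[OF sol] by blast
      show "0 \<le> \<delta> * rate \<theta>"
        using \<delta> \<eta> \<open>\<eta> \<le> \<theta>\<close> rate_pos[of \<theta>] by simp
      show "\<forall>s\<ge>0. \<theta> \<le> lyap x w s \<longrightarrow> lyap_dot (x s) \<delta> (gsol x w s) \<le> - (\<delta> * rate \<theta>)"
      proof (intro allI impI)
        fix s :: real
        assume "s \<ge> 0" "\<theta> \<le> lyap x w s"
        moreover have "lyap x w s \<le> r"
          using lyap_le_max_initial[OF assms(1) \<open>s \<ge> 0\<close>] assms(1) \<eta> by linarith
        ultimately show "lyap_dot (x s) \<delta> (gsol x w s) \<le> - (\<delta> * rate \<theta>)"
          using \<open>\<eta> \<le> \<theta>\<close> by (intro lyap_dot_le_neg_rate)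
      qed
    qed (rule assms(2))
    then show ?thesis
      by (simp add: mult.commute mult.left_commute)
  qed
qed

end

lemma lyap_le_eta_add_kl_envelope:
  assumes "0 < \<eta>" "\<eta> < r"
  shows "\<exists>\<delta>s>0. \<forall>\<delta>. 0 < \<delta> \<and> \<delta> < \<delta>s \<longrightarrow> (\<forall>x w. seeking_solution c f A (\<lambda>a. \<delta> * dbar a) x w \<and> lyap x w 0 < r \<longrightarrow>
     (\<forall>t\<ge>0. lyap x w t \<le> \<eta> + kl_envelope rate (lyap x w 0) (\<delta> * t)))"
proof -
  obtain C \<delta>1 where "C > 0" "\<delta>1 > 0" and bound: "\<forall>\<delta> xv gv. 0 < \<delta> \<longrightarrow> \<delta> \<le> \<delta>1 \<longrightarrow> tracks_pg xv gv \<longrightarrow>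
      wdist xv \<le> r \<longrightarrow> lyap_dot xv \<delta> gv \<le> - \<delta> * (alg_conn / 8 * cons_err gv + 2 * gap xv) + C * \<delta>\<^sup>2"
    using lyap_dot_le[of r] by blast
  show ?thesis
  proof (intro exI[of _ "min \<delta>1 (rate \<eta> / C)"] conjI allI impI)
    show "0 < min \<delta>1 (rate \<eta> / C)"
      using \<open>C > 0\<close> \<open>\<delta>1 > 0\<close> rate_pos \<open>0 < \<eta>\<close> by simp
    fix \<delta> x w and t :: real
    assume \<delta>: "0 < \<delta> \<and> \<delta> < min \<delta>1 (rate \<eta> / C)"
      and "seeking_solution c f A (\<lambda>a. \<delta> * dbar a) x w \<and> lyap x w 0 < r" and "0 \<le> t"
    moreover have "C * \<delta> \<le> rate \<eta>"
      using \<delta> \<open>C > 0\<close> by (simp add: field_simps)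
    ultimately show "lyap x w t \<le> \<eta> + kl_envelope rate (lyap x w 0) (\<delta> * t)"
      using bound assms by (intro lyap_le_kl_envelope) auto
  qed
qed

lemma chi_norm_practically_stable:
  "\<exists>\<phi>. classKL \<phi> \<and>
    (\<forall>\<Delta>>0. \<forall>v>0. \<exists>\<delta>s>0. \<forall>\<delta>. 0 < \<delta> \<and> \<delta> < \<delta>s \<longrightarrow>
      (\<forall>x w. seeking_solution c f A (\<lambda>a. \<delta> * dbar a) x w \<and>
             chi_norm c f R xs (x 0) (\<lambda>j k. w j k 0) < \<Delta> \<longrightarrow>
        (\<forall>t\<ge>0. chi_norm c f R xs (x t) (\<lambda>j k. w j k t)
                 \<le> \<phi> (chi_norm c f R xs (x 0) (\<lambda>j k. w j k 0)) (\<delta> * t) + v)))"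
proof -
  define c1 where "c1 = min 1 weight_min"
  define L where "L = max 1 weight_max"
  have "c1 > 0" "L \<ge> 1"
    unfolding c1_def L_def using weight_min_pos by auto
  show ?thesis
  proof (intro exI[of _ "kl_bound (1 / c1) L"] conjI allI impI)
    show "classKL (kl_bound (1 / c1) L)"
      using \<open>c1 > 0\<close> \<open>L \<ge> 1\<close> by (intro classKL_kl_bound) auto
    fix \<Delta> v :: real
    assume "\<Delta> > 0" "v > 0"
    define \<eta> where "\<eta> = min (1 / 2) (c1 * v\<^sup>2)"
    have "0 \<le> L * \<Delta>\<^sup>2"
      using \<open>L \<ge> 1\<close> by simp
    then have \<eta>: "0 < \<eta>" "\<eta> < L * \<Delta>\<^sup>2 + 1" "\<eta> \<le> c1 * v\<^sup>2"
      unfolding \<eta>_def using \<open>c1 > 0\<close> \<open>v > 0\<close> by auto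
    then obtain \<delta>s where "\<delta>s > 0" and lyap_bound: "\<forall>\<delta>. 0 < \<delta> \<and> \<delta> < \<delta>s \<longrightarrow>
        (\<forall>x w. seeking_solution c f A (\<lambda>a. \<delta> * dbar a) x w \<and> lyap x w 0 < L * \<Delta>\<^sup>2 + 1 \<longrightarrow>
          (\<forall>t\<ge>0. lyap x w t \<le> \<eta> + kl_envelope rate (lyap x w 0) (\<delta> * t)))"
      using lyap_le_eta_add_kl_envelope by blast
    show "\<exists>\<delta>s>0. \<forall>\<delta>. 0 < \<delta> \<and> \<delta> < \<delta>s \<longrightarrow>
      (\<forall>x w. seeking_solution c f A (\<lambda>a. \<delta> * dbar a) x w \<and>
             chi_norm c f R xs (x 0) (\<lambda>j k. w j k 0) < \<Delta> \<longrightarrow>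
        (\<forall>t\<ge>0. chi_norm c f R xs (x t) (\<lambda>j k. w j k t)
                 \<le> kl_bound (1 / c1) L (chi_norm c f R xs (x 0) (\<lambda>j k. w j k 0)) (\<delta> * t) + v))"
    proof (intro exI[of _ \<delta>s] conjI allI impI \<open>\<delta>s > 0\<close>; elim conjE)
      fix \<delta> x w and t :: real
      assume \<delta>: "0 < \<delta>" "\<delta> < \<delta>s" and sol: "seeking_solution c f A (\<lambda>a. \<delta> * dbar a) x w"
        and chi_0: "chi_norm c f R xs (x 0) (\<lambda>j k. w j k 0) < \<Delta>" and "0 \<le> t"
      have "(chi_norm c f R xs (x 0) (\<lambda>j k. w j k 0))\<^sup>2 \<le> \<Delta>\<^sup>2"
        using chi_0 chi_norm_nonneg by (intro power_mono) (auto simp: less_imp_le)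
      then have "L * (chi_norm c f R xs (x 0) (\<lambda>j k. w j k 0))\<^sup>2 \<le> L * \<Delta>\<^sup>2"
        using \<open>L \<ge> 1\<close> by (intro mult_left_mono) auto
      then have "lyap x w 0 < L * \<Delta>\<^sup>2 + 1"
        using lyap_le_chi_norm[OF sol, of 0] unfolding L_def by linarith
      then have "lyap x w t \<le> \<eta> + kl_envelope rate (lyap x w 0) (\<delta> * t)"
        using lyap_bound \<delta> sol \<open>0 \<le> t\<close> by blast
      then show "chi_norm c f R xs (x t) (\<lambda>j k. w j k t)
          \<le> kl_bound (1 / c1) L (chi_norm c f R xs (x 0) (\<lambda>j k. w j k 0)) (\<delta> * t) + v"
        using \<eta> \<open>v > 0\<close> unfolding c1_def L_def by (intro chi_norm_le_kl_bound[OF sol]) auto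
    qed
  qed
qed

end

theorem theorem1:
  fixes c :: "'a::finite \<Rightarrow> 'b::finite"
    and f :: "'a \<Rightarrow> real^'a \<Rightarrow> real"
    and A :: "'a \<Rightarrow> 'a \<Rightarrow> real"
    and dbar :: "'a \<Rightarrow> real"
    and xs :: "real^'a"
    and R :: "'a \<Rightarrow> 'a \<Rightarrow> nat \<Rightarrow> real"
  assumes N2: "CARD('b) \<ge> 2"
    and m2: "\<forall>i. card {a. c a = i} \<ge> 2"
    and A1: "\<forall>a. C2 (f a)"
    and A2: "strictly_monotone (pseudo_gradient c f)"
    and NE: "nash_eq c f xs"
    and GI: "\<forall>i. graph_connected {a. c a = i} (interferes c f)"
    and GC: "\<forall>k. graph_connected (cvert c f k) (\<lambda>j l. A j l > 0)"
    and Asym: "\<forall>j l. c j = c l \<longrightarrow> A j l = A l j"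
    and Anonneg: "\<forall>j l. c j = c l \<longrightarrow> A j l \<ge> 0"
    and Adiag: "\<forall>j. A j j = 0"
    and dpos: "\<forall>a. dbar a > 0"
    and R: "orth_compl c f R"
  shows "\<exists>\<phi>. classKL \<phi> \<and>
    (\<forall>\<Delta>>0. \<forall>v>0. \<exists>\<delta>s>0. \<forall>\<delta>. 0 < \<delta> \<and> \<delta> < \<delta>s \<longrightarrow>
      (\<forall>x w. seeking_solution c f A (\<lambda>a. \<delta> * dbar a) x w \<and>
             chi_norm c f R xs (x 0) (\<lambda>j k. w j k 0) < \<Delta> \<longrightarrow>
        (\<forall>t\<ge>0. chi_norm c f R xs (x t) (\<lambda>j k. w j k t)
                 \<le> \<phi> (chi_norm c f R xs (x 0) (\<lambda>j k. w j k 0)) (\<delta> * t) + v)))"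
proof -
  interpret coalition_game c f A dbar xs R
    using A1 A2 NE GC Asym Anonneg dpos R by unfold_locales
  show ?thesis
    by (rule chi_norm_practically_stable)
qed

end
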